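(* Let $X$ be a shift space over $\mathcal{A}$ and let $v\in\mathcal{L}(X)$ be a dendric bispecial factor. An injective and strongly left proper morphism $\sigma:\mathcal{A}^*\to\mathcal{B}^*$ is dendric preserving for $v$ if and only if (1) for every $s\in\mathcal{T}^-_v(\sigma)\setminus\{s_0\}$, the graph $\mathcal{E}_{X,s,p_0}(v)$ is a tree, and (2) for every $p\in\mathcal{T}^+_v(\sigma)\setminus\{p_0\}$, the graph $\mathcal{E}_{X,s_0,p}(v)$ is a tree.
   Context: A shift space over $\mathcal{A}$ is a closed shift-invariant $X\subseteq\mathcal{A}^{\mathbb{Z}}$ in which all letters occur, with factor set $\mathcal{L}(X)$. For $w\in\mathcal{L}(X)$: $E^-_X(w)=\{a:aw\in\mathcal{L}(X)\}$, $E^+_X(w)=\{b:wb\in\mathcal{L}(X)\}$, $E_X(w)=\{(a,b):awb\in\mathcal{L}(X)\}$; $\mathcal{E}_X(w)$ is the bipartite graph on left vertices $E^-_X(w)$ and right vertices $E^+_X(w)$ with edge set $E_X(w)$; $w$ is bispecial if $\#E^-_X(w)\ge2$ and $\#E^+_X(w)\ge2$; $w$ is dendric if $\mathcal{E}_X(w)$ is a tree. Morphisms are non-erasing; $\sigma$ is strongly left proper with first letter $\ell$ if every $\sigma(a)$ begins with $\ell$ and contains $\ell$ exactly once. The image of $X$ under $\sigma$ is $Y=\{S^k\sigma(x):x\in X,0\le k<|\sigma(x_0)|\}$. For non-empty $u\in\mathcal{L}(Y)$ containing $\ell$, there is a unique triple $(s,v,p)$, $v\in\mathcal{L}(X)$,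 $u=s\sigma(v)p$, with $s$ a proper suffix of $\sigma(a)$ and $p$ a non-empty prefix of $\sigma(b)$ for some $(a,b)\in E_X(v)$; $u$ is then an extended image of $v$. $\sigma$ is dendric preserving for $v$ if every bispecial extended image $u$ of $v$ is dendric in $Y$. Notation: $s(a_1,a_2)$/$p(b_1,b_2)$: longest common suffix of $\sigma(a_1),\sigma(a_2)$ / longest common prefix of $\sigma(b_1),\sigma(b_2)$. $\mathcal{T}^-_v(\sigma)=\{s(a_1,a_2):a_1\ne a_2\in E^-_X(v)\}$, $\mathcal{T}^+_v(\sigma)=\{p(b_1,b_2):b_1\ne b_2\in E^+_X(v)\}$; $s_0$ is the shortest element of $\mathcal{T}^-_v(\sigma)\cup\sigma(E^-_X(v))$ and $p_0$ the shortest element of $\mathcal{T}^+_v(\sigma)\cup\sigma(E^+_X(v))\ell$. For words $x,y$: $E^-_{X,x}(v)=\{a\in E^-_X(v):\sigma(a)\in\mathcal{B}^*x\}$, $E^+_{X,y}(v)=\{b\in E^+_X(v):\sigma(b)\ell\in y\mathcal{B}^*\}$, $E_{X,x,y}(v)=E_X(v)\cap(E^-_{X,x}(v)\times E^+_{X,y}(v))$, and $\mathcal{E}_{X,x,y}(v)$ is the subgraph of $\mathcal{E}_X(v)$ with edge set $E_{X,x,y}(v)$ and vertex set the vertices incident to these edges. *)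

theory Defs
  imports Main "HOL-Library.Sublist"
begin

definition occurs_at :: "'a list \<Rightarrow> (int \<Rightarrow> 'a) \<Rightarrow> int \<Rightarrow> bool" where
  "occurs_at w x i \<longleftrightarrow> (\<forall>k<length w. x (i + int k) = w ! k)"

definition lang :: "(int \<Rightarrow> 'a) set \<Rightarrow> 'a list set" where
  "lang X = {w. \<exists>x\<in>X. \<exists>i. occurs_at w x i}"

definition shift_map :: "(int \<Rightarrow> 'a) \<Rightarrow> (int \<Rightarrow> 'a)" where
  "shift_map x = (\<lambda>n. x (n + 1))"

text \<open>Closed in the product topology of discrete spaces: every sequence that agrees with
  elements of X on arbitrarily large central windows belongs to X.\<close>
definition closed_seqs :: "(int \<Rightarrow> 'a) set \<Rightarrow> bool" where
  "closed_seqs X \<longleftrightarrow>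
     (\<forall>y. (\<forall>n::nat. \<exists>x\<in>X. \<forall>i. \<bar>i\<bar> \<le> int n \<longrightarrow> x i = y i) \<longrightarrow> y \<in> X)"

definition shift_space :: "(int \<Rightarrow> 'a) set \<Rightarrow> bool" where
  "shift_space X \<longleftrightarrow> closed_seqs X \<and> shift_map ` X = X \<and> (\<forall>a. [a] \<in> lang X)"

definition left_ext :: "(int \<Rightarrow> 'a) set \<Rightarrow> 'a list \<Rightarrow> 'a set" where
  "left_ext X w = {a. a # w \<in> lang X}"

definition right_ext :: "(int \<Rightarrow> 'a) set \<Rightarrow> 'a list \<Rightarrow> 'a set" where
  "right_ext X w = {b. w @ [b] \<in> lang X}"

definition ext :: "(int \<Rightarrow> 'a) set \<Rightarrow> 'a list \<Rightarrow> ('a \<times> 'a) set" where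
  "ext X w = {(a, b). a # w @ [b] \<in> lang X}"

definition bispecial :: "(int \<Rightarrow> 'a) set \<Rightarrow> 'a list \<Rightarrow> bool" where
  "bispecial X w \<longleftrightarrow> w \<in> lang X \<and> card (left_ext X w) \<ge> 2 \<and> card (right_ext X w) \<ge> 2"

text \<open>A simple undirected graph given by a vertex set V and a symmetric adjacency relation.\<close>
definition ug_connected :: "'v set \<Rightarrow> ('v \<Rightarrow> 'v \<Rightarrow> bool) \<Rightarrow> bool" where
  "ug_connected V adj \<longleftrightarrow>
     (\<forall>u\<in>V. \<forall>w\<in>V. (u, w) \<in> {(x, y). x \<in> V \<and> y \<in> V \<and> adj x y}\<^sup>*)"

definition ug_cycle :: "'v set \<Rightarrow> ('v \<Rightarrow> 'v \<Rightarrow> bool) \<Rightarrow> 'v list \<Rightarrow> bool" where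
  "ug_cycle V adj cs \<longleftrightarrow> length cs \<ge> 3 \<and> distinct cs \<and> set cs \<subseteq> V \<and>
     (\<forall>i. Suc i < length cs \<longrightarrow> adj (cs ! i) (cs ! Suc i)) \<and> adj (last cs) (hd cs)"

definition ug_tree :: "'v set \<Rightarrow> ('v \<Rightarrow> 'v \<Rightarrow> bool) \<Rightarrow> bool" where
  "ug_tree V adj \<longleftrightarrow> V \<noteq> {} \<and> ug_connected V adj \<and> (\<nexists>cs. ug_cycle V adj cs)"

fun bip_adj :: "('a \<times> 'b) set \<Rightarrow> 'a + 'b \<Rightarrow> 'a + 'b \<Rightarrow> bool" where
  "bip_adj E (Inl a) (Inr b) \<longleftrightarrow> (a, b) \<in> E"
| "bip_adj E (Inr b) (Inl a) \<longleftrightarrow> (a, b) \<in> E"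
| "bip_adj E _ _ \<longleftrightarrow> False"

definition bip_tree :: "'a set \<Rightarrow> 'b set \<Rightarrow> ('a \<times> 'b) set \<Rightarrow> bool" where
  "bip_tree L R E \<longleftrightarrow> ug_tree (Inl ` L \<union> Inr ` R) (bip_adj E)"

definition dendric :: "(int \<Rightarrow> 'a) set \<Rightarrow> 'a list \<Rightarrow> bool" where
  "dendric X w \<longleftrightarrow> w \<in> lang X \<and> bip_tree (left_ext X w) (right_ext X w) (ext X w)"

definition morph :: "('a \<Rightarrow> 'b list) \<Rightarrow> 'a list \<Rightarrow> 'b list" where
  "morph \<sigma> w = concat (map \<sigma> w)"

definition strongly_left_proper :: "('a \<Rightarrow> 'b list) \<Rightarrow> 'b \<Rightarrow> bool" where
  "strongly_left_proper \<sigma> l \<longleftrightarrow> (\<forall>a. \<sigma> a \<noteq> [] \<and> hd (\<sigma> a) = l \<and> count_list (\<sigma> a) l = 1)"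

text \<open>Starting position of sigma(x_i) in sigma(x), sigma(x_0) starting at position 0.\<close>
definition img_pos :: "('a \<Rightarrow> 'b list) \<Rightarrow> (int \<Rightarrow> 'a) \<Rightarrow> int \<Rightarrow> int" where
  "img_pos \<sigma> x i =
     (if i \<ge> 0 then int (\<Sum>j<nat i. length (\<sigma> (x (int j))))
      else - int (\<Sum>j\<in>{1..nat (- i)}. length (\<sigma> (x (- int j)))))"

text \<open>y is the bi-infinite word sigma(x) = ... sigma(x_{-1}) . sigma(x_0) sigma(x_1) ...\<close>
definition is_image_seq :: "('a \<Rightarrow> 'b list) \<Rightarrow> (int \<Rightarrow> 'a) \<Rightarrow> (int \<Rightarrow> 'b) \<Rightarrow> bool" where
  "is_image_seq \<sigma> x y \<longleftrightarrow>
     (\<forall>i. \<forall>k<length (\<sigma> (x i)). y (img_pos \<sigma> x i + int k) = \<sigma> (x i) ! k)"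

definition image_shift :: "('a \<Rightarrow> 'b list) \<Rightarrow> (int \<Rightarrow> 'a) set \<Rightarrow> (int \<Rightarrow> 'b) set" where
  "image_shift \<sigma> X =
     {(\<lambda>n. y (n + int k)) | x y k. x \<in> X \<and> is_image_seq \<sigma> x y \<and> k < length (\<sigma> (x 0))}"

definition ext_image :: "('a \<Rightarrow> 'b list) \<Rightarrow> (int \<Rightarrow> 'a) set \<Rightarrow> 'a list \<Rightarrow> 'b list \<Rightarrow> bool" where
  "ext_image \<sigma> X v u \<longleftrightarrow> u \<in> lang (image_shift \<sigma> X) \<and>
     (\<exists>a b s p. (a, b) \<in> ext X v \<and> suffix s (\<sigma> a) \<and> s \<noteq> \<sigma> a \<and>
        prefix p (\<sigma> b) \<and> p \<noteq> [] \<and> u = s @ morph \<sigma> v @ p)"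

definition dendric_preserving :: "('a \<Rightarrow> 'b list) \<Rightarrow> (int \<Rightarrow> 'a) set \<Rightarrow> 'a list \<Rightarrow> bool" where
  "dendric_preserving \<sigma> X v \<longleftrightarrow>
     (\<forall>u. ext_image \<sigma> X v u \<longrightarrow> bispecial (image_shift \<sigma> X) u \<longrightarrow> dendric (image_shift \<sigma> X) u)"

fun lcp :: "'b list \<Rightarrow> 'b list \<Rightarrow> 'b list" where
  "lcp (x # xs) (y # ys) = (if x = y then x # lcp xs ys else [])"
| "lcp _ _ = []"

definition lcs :: "'b list \<Rightarrow> 'b list \<Rightarrow> 'b list" where
  "lcs xs ys = rev (lcp (rev xs) (rev ys))"

definition T_minus :: "('a \<Rightarrow> 'b list) \<Rightarrow> (int \<Rightarrow> 'a) set \<Rightarrow> 'a list \<Rightarrow> 'b list set" where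
  "T_minus \<sigma> X v = {lcs (\<sigma> a1) (\<sigma> a2) | a1 a2.
      a1 \<in> left_ext X v \<and> a2 \<in> left_ext X v \<and> a1 \<noteq> a2}"

definition T_plus :: "('a \<Rightarrow> 'b list) \<Rightarrow> (int \<Rightarrow> 'a) set \<Rightarrow> 'a list \<Rightarrow> 'b list set" where
  "T_plus \<sigma> X v = {lcp (\<sigma> b1) (\<sigma> b2) | b1 b2.
      b1 \<in> right_ext X v \<and> b2 \<in> right_ext X v \<and> b1 \<noteq> b2}"

definition s_zero :: "('a \<Rightarrow> 'b list) \<Rightarrow> (int \<Rightarrow> 'a) set \<Rightarrow> 'a list \<Rightarrow> 'b list" where
  "s_zero \<sigma> X v = arg_min length (\<lambda>s. s \<in> T_minus \<sigma> X v \<union> \<sigma> ` left_ext X v)"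

definition p_zero :: "('a \<Rightarrow> 'b list) \<Rightarrow> 'b \<Rightarrow> (int \<Rightarrow> 'a) set \<Rightarrow> 'a list \<Rightarrow> 'b list" where
  "p_zero \<sigma> l X v = arg_min length
     (\<lambda>p. p \<in> T_plus \<sigma> X v \<union> (\<lambda>b. \<sigma> b @ [l]) ` right_ext X v)"

definition left_ext_x :: "('a \<Rightarrow> 'b list) \<Rightarrow> (int \<Rightarrow> 'a) set \<Rightarrow> 'a list \<Rightarrow> 'b list \<Rightarrow> 'a set" where
  "left_ext_x \<sigma> X v x = {a \<in> left_ext X v. suffix x (\<sigma> a)}"

definition right_ext_y :: "('a \<Rightarrow> 'b list) \<Rightarrow> 'b \<Rightarrow> (int \<Rightarrow> 'a) set \<Rightarrow> 'a list \<Rightarrow> 'b list \<Rightarrow> 'a set" where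
  "right_ext_y \<sigma> l X v y = {b \<in> right_ext X v. prefix y (\<sigma> b @ [l])}"

definition ext_xy :: "('a \<Rightarrow> 'b list) \<Rightarrow> 'b \<Rightarrow> (int \<Rightarrow> 'a) set \<Rightarrow> 'a list \<Rightarrow> 'b list \<Rightarrow> 'b list \<Rightarrow> ('a \<times> 'a) set" where
  "ext_xy \<sigma> l X v x y = ext X v \<inter> (left_ext_x \<sigma> X v x \<times> right_ext_y \<sigma> l X v y)"

definition ext_xy_tree :: "('a \<Rightarrow> 'b list) \<Rightarrow> 'b \<Rightarrow> (int \<Rightarrow> 'a) set \<Rightarrow> 'a list \<Rightarrow> 'b list \<Rightarrow> 'b list \<Rightarrow> bool" where
  "ext_xy_tree \<sigma> l X v x y \<longleftrightarrow>
     bip_tree (fst ` ext_xy \<sigma> l X v x y) (snd ` ext_xy \<sigma> l X v x y) (ext_xy \<sigma> l X v x y)"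

end

theory Submission
  imports Defs
begin

text \<open>Let G be the extension graph of v, a tree. Since \<sigma> is injective and strongly left
  proper, the marker l occurs in an extended image u = s \<sigma>(v) p exactly at the boundaries of
  the blocks \<sigma>(a), so occurrences of u in the image parse uniquely: the extension graph of u
  is the image of the subgraph G(s, p) of G (edges (a, b) with s a suffix of \<sigma>(a) and p a
  prefix of \<sigma>(b) l) under the map sending a to the letter before s in \<sigma>(a) and b to the
  letter after p in \<sigma>(b) l. The fibres of this map are the subgraphs G(c s, p) and G(s, p d).
  Collapsing a tree along connected fibres gives a tree, and a graph with connected image and
  connected fibres is connected; by induction on |s| + |p|, \<sigma> is therefore dendric preserving
  for v iff G(s, p) is connected for every extended image s \<sigma>(v) p.

  In the tree G, the subgraph G(s, p) is the intersection of G(s, \<epsilon>) and G(\<epsilon>, p), and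
  G(s, \<epsilon>) equals G(t, p0), where t is the longest common suffix of the images of its left
  vertices; t lies in T_minus and equals s0 only when G(s, \<epsilon>) is all of G. Symmetrically
  on the right, so conditions (1) and (2) are exactly what is needed.\<close>

section \<open>Undirected graphs\<close>

definition ug_edges :: "'v set \<Rightarrow> ('v \<Rightarrow> 'v \<Rightarrow> bool) \<Rightarrow> ('v \<times> 'v) set" where
  "ug_edges V adj = {(x, y). x \<in> V \<and> y \<in> V \<and> adj x y}"

lemma ug_connected_iff_edges:
  "ug_connected V adj \<longleftrightarrow> (\<forall>u\<in>V. \<forall>w\<in>V. (u, w) \<in> (ug_edges V adj)\<^sup>*)"
  unfolding ug_connected_def ug_edges_def by simp

lemma ug_connected_star:
  assumes "c \<in> V" "\<And>u. u \<in> V \<Longrightarrow> u \<noteq> c \<Longrightarrow> adj u c \<and> adj c u"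
  shows "ug_connected V adj"
proof -
  have to_c: "(u, c) \<in> (ug_edges V adj)\<^sup>*" and from_c: "(c, u) \<in> (ug_edges V adj)\<^sup>*"
    if "u \<in> V" for u
    using that assms by (cases "u = c"; force simp: ug_edges_def)+
  show ?thesis
    unfolding ug_connected_iff_edges by (meson to_c from_c rtrancl_trans)
qed

lemma ug_cycle_iff_successively:
  "ug_cycle V adj cs \<longleftrightarrow> 3 \<le> length cs \<and> distinct cs \<and> set cs \<subseteq> V \<and>
     successively adj cs \<and> adj (last cs) (hd cs)"
  unfolding ug_cycle_def successively_conv_nth by blast

lemma ug_cycle_mono:
  assumes "ug_cycle V adj cs" "set cs \<subseteq> V'"
    and "\<And>x y. x \<in> set cs \<Longrightarrow> y \<in> set cs \<Longrightarrow> adj x y \<Longrightarrow> adj' x y"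
  shows "ug_cycle V' adj' cs"
proof -
  have cs: "3 \<le> length cs" "distinct cs" "successively adj cs" "adj (last cs) (hd cs)"
    using assms(1) by (auto simp: ug_cycle_iff_successively)
  then have "cs \<noteq> []" by auto
  then show ?thesis
    using cs assms(2,3) successively_mono[OF cs(3) assms(3)]
    by (simp add: ug_cycle_iff_successively)
qed

lemma ug_cycle_rotate:
  assumes "ug_cycle V adj (xs @ ys)"
  shows "ug_cycle V adj (ys @ xs)"
proof (cases "xs = [] \<or> ys = []")
  case True
  then show ?thesis using assms by auto
next
  case False
  then show ?thesis
    using assms by (auto simp: ug_cycle_iff_successively successively_append_iff)
qed

lemma ug_cycle_rotate_to:
  assumes "ug_cycle V adj cs" "x \<in> set cs"
  obtains ys where "ug_cycle V adj (x # ys)" "set ys = set cs - {x}"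
proof -
  obtain pre post where cs: "cs = pre @ x # post"
    using split_list[OF assms(2)] by blast
  then have "ug_cycle V adj ((x # post) @ pre)"
    using ug_cycle_rotate[of V adj pre "x # post"] assms(1) by simp
  moreover have "distinct cs" using assms(1) by (simp add: ug_cycle_iff_successively)
  ultimately show ?thesis using cs that[of "post @ pre"] by auto
qed

definition image_adj :: "'v set \<Rightarrow> ('v \<Rightarrow> 'v \<Rightarrow> bool) \<Rightarrow> ('v \<Rightarrow> 'w) \<Rightarrow> 'w \<Rightarrow> 'w \<Rightarrow> bool" where
  "image_adj V adj h c d \<longleftrightarrow> (\<exists>u\<in>V. \<exists>w\<in>V. adj u w \<and> h u = c \<and> h w = d)"

lemma rtrancl_ug_edges_image:
  assumes "(u, w) \<in> (ug_edges V adj)\<^sup>*"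
  shows "(h u, h w) \<in> (ug_edges (h ` V) (image_adj V adj h))\<^sup>*"
  using assms
proof (induction rule: rtrancl_induct)
  case (step y z)
  then have "(h y, h z) \<in> ug_edges (h ` V) (image_adj V adj h)"
    unfolding ug_edges_def image_adj_def by auto
  with step.IH show ?case by (rule rtrancl_into_rtrancl)
qed simp

lemma ug_connected_image:
  assumes "ug_connected V adj"
  shows "ug_connected (h ` V) (image_adj V adj h)"
  unfolding ug_connected_iff_edges
proof (intro ballI)
  fix c d assume "c \<in> h ` V" "d \<in> h ` V"
  then obtain u w where "u \<in> V" "w \<in> V" "c = h u" "d = h w" by blast
  then show "(c, d) \<in> (ug_edges (h ` V) (image_adj V adj h))\<^sup>*"
    using assms rtrancl_ug_edges_image unfolding ug_connected_iff_edges by metis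
qed

lemma ug_connected_lift:
  assumes "ug_connected (h ` V) (image_adj V adj h)"
    and fibres: "\<And>x y. x \<in> V \<Longrightarrow> y \<in> V \<Longrightarrow> h x = h y \<Longrightarrow> (x, y) \<in> (ug_edges V adj)\<^sup>*"
  shows "ug_connected V adj"
  unfolding ug_connected_iff_edges
proof (intro ballI)
  fix x y assume xy: "x \<in> V" "y \<in> V"
  have "\<forall>y'\<in>V. h y' = c \<longrightarrow> (x, y') \<in> (ug_edges V adj)\<^sup>*"
    if "(h x, c) \<in> (ug_edges (h ` V) (image_adj V adj h))\<^sup>*" for c
    using that
  proof (induction rule: rtrancl_induct)
    case base
    then show ?case using fibres xy by auto
  next
    case (step c d)
    then obtain u w where uw: "u \<in> V" "w \<in> V" "adj u w" "h u = c" "h w = d"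
      unfolding ug_edges_def image_adj_def by blast
    have "(x, u) \<in> (ug_edges V adj)\<^sup>*" using step.IH uw(1,4) by blast
    moreover have "(u, w) \<in> ug_edges V adj" using uw unfolding ug_edges_def by simp
    ultimately have "(x, w) \<in> (ug_edges V adj)\<^sup>*" by (rule rtrancl_into_rtrancl)
    then show ?case using fibres[OF uw(2)] uw(5) by (auto intro: rtrancl_trans)
  qed
  then show "(x, y) \<in> (ug_edges V adj)\<^sup>*"
    using assms(1) xy unfolding ug_connected_iff_edges by blast
qed

lemma ug_tree_inj_image:
  assumes tree: "ug_tree V adj" and inj: "inj_on h V"
  shows "ug_tree (h ` V) (image_adj V adj h)"
proof -
  have "\<not> ug_cycle (h ` V) (image_adj V adj h) cs" for cs
  proof
    assume cy: "ug_cycle (h ` V) (image_adj V adj h) cs"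
    define g where "g = the_inv_into V h"
    have g_adj: "adj (g c) (g d)" if "image_adj V adj h c d" for c d
      using that the_inv_into_f_f[OF inj] unfolding image_adj_def g_def by auto
    have cs: "set cs \<subseteq> h ` V" "3 \<le> length cs" "distinct cs"
      "successively (image_adj V adj h) cs" "image_adj V adj h (last cs) (hd cs)"
      using cy by (auto simp: ug_cycle_iff_successively)
    have "ug_cycle V adj (map g cs)"
      unfolding ug_cycle_iff_successively
    proof (intro conjI)
      show "distinct (map g cs)"
        using cs(1,3) inj_on_subset[OF inj_on_the_inv_into[OF inj] cs(1)]
        by (simp add: distinct_map g_def)
      show "set (map g cs) \<subseteq> V"
        using cs(1) the_inv_into_into[OF inj] unfolding g_def by auto
      show "successively adj (map g cs)"
        unfolding successively_map using cs(4) by (rule successively_mono) (rule g_adj)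
      have "cs \<noteq> []" using cs(2) by auto
      then show "adj (last (map g cs)) (hd (map g cs))"
        using cs(5) g_adj by (simp add: last_map hd_map)
    qed (use cs in simp)
    then show False using tree unfolding ug_tree_def by blast
  qed
  then show ?thesis using tree ug_connected_image unfolding ug_tree_def by blast
qed

lemma ug_cycle_of_path_and_detour:
  assumes V: "set ys \<subseteq> V" "a \<in> V" "b \<in> V" "z \<in> V"
    and d: "distinct ys" "2 \<le> length ys" "a \<notin> set ys" "b \<notin> set ys" "a \<noteq> b" "z \<noteq> a" "z \<noteq> b"
    and s: "successively adj ys" "adj a (hd ys)" "adj (last ys) b" "adj b z" "adj z a"
  shows "\<exists>cs. ug_cycle V adj cs"
proof (cases "z \<in> set ys")
  case False
  have "ys \<noteq> []" using d(2) by auto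
  then have "successively adj (a # ys @ [b, z])"
    using s by (simp add: successively_append_iff successively_Cons)
  then have "ug_cycle V adj (a # ys @ [b, z])"
    using V d s False by (auto simp: ug_cycle_iff_successively)
  then show ?thesis by blast
next
  case True
  then obtain A B where ys: "ys = A @ z # B" using split_list by metis
  have sA: "successively adj (A @ [z])" "successively adj (z # B)"
    using s(1) successively_append_iff[of adj "A @ [z]" B] successively_append_iff[of adj A "z # B"]
    unfolding ys by auto
  show ?thesis
  proof (cases "A = []")
    case False
    then have "ug_cycle V adj (a # A @ [z])"
      using V d s sA ys by (cases A) (auto simp: ug_cycle_iff_successively successively_append_iff)
    then show ?thesis by blast
  next
    case True
    then have "B \<noteq> []" using d(2) ys by auto
    then have "successively adj ((z # B) @ [b])"
      using sA(2) s(3) ys True by (simp only: successively_append_iff) simp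
    then have "ug_cycle V adj (z # B @ [b])"
      using V d s ys True by (auto simp: ug_cycle_iff_successively)
    then show ?thesis by blast
  qed
qed

lemma ug_cycle_through_merged_vertex:
  assumes sym: "\<And>u w. adj u w \<Longrightarrow> adj w u"
    and V: "x \<in> V" "y \<in> V" "z \<in> V" and d: "x \<noteq> y" "z \<noteq> x" "z \<noteq> y"
    and path: "adj x z" "adj z y"
    and m: "m = (\<lambda>v. if v = y then x else v)"
    and cycle: "ug_cycle (m ` V) (image_adj V adj m) (x # ys)"
  shows "\<exists>cs. ug_cycle V adj cs"
proof -
  let ?q = "image_adj V adj m"
  have mV: "m ` V \<subseteq> V" "y \<notin> m ` V" using V d unfolding m by auto
  have c0: "3 \<le> length (x # ys)" "distinct (x # ys)" "set (x # ys) \<subseteq> m ` V"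
    "successively ?q (x # ys)" "?q (last (x # ys)) (hd (x # ys))"
    using cycle unfolding ug_cycle_iff_successively by blast+
  then have "ys \<noteq> []" by auto
  then have c: "2 \<le> length ys" "distinct ys" "x \<notin> set ys" "y \<notin> set ys" "set ys \<subseteq> V"
    "successively ?q ys" "?q x (hd ys)" "?q (last ys) x"
    using c0 mV by (auto simp: successively_Cons)
  have ys: "ys \<noteq> []" "hd ys \<noteq> x" "last ys \<noteq> x" using c(3) \<open>ys \<noteq> []\<close> by auto
  have q_adj: "adj u w" if "u \<noteq> x" "w \<noteq> x" "?q u w" for u w
    using that unfolding image_adj_def m by (auto split: if_splits)
  have path_ys: "successively adj ys"
    using c(6) by (rule successively_mono) (use c(3) in \<open>auto intro: q_adj\<close>)
  have "adj x (hd ys) \<or> adj y (hd ys)" "adj (last ys) x \<or> adj (last ys) y"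
    using ys(2,3) c(7,8) unfolding image_adj_def m by (auto split: if_splits)
  moreover have "ug_cycle V adj (t # ys)" if "t \<in> {x, y}" "adj t (hd ys)" "adj (last ys) t" for t
    using that c V ys path_ys by (auto simp: ug_cycle_iff_successively successively_Cons)
  moreover have "\<exists>cs. ug_cycle V adj cs" if "adj a (hd ys)" "adj (last ys) b" "{a, b} = {x, y}" for a b
    using that ug_cycle_of_path_and_detour[of ys V a b z adj] c V d path sym path_ys
    by (auto simp: doubleton_eq_iff)
  ultimately show ?thesis by blast
qed

lemma ug_tree_merge_distance_two:
  assumes tree: "ug_tree V adj" and sym: "\<And>u w. adj u w \<Longrightarrow> adj w u"
    and V: "x \<in> V" "y \<in> V" "z \<in> V" and d: "x \<noteq> y" "z \<noteq> x" "z \<noteq> y"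
    and path: "adj x z" "adj z y"
    and m: "m = (\<lambda>v. if v = y then x else v)"
  shows "ug_tree (m ` V) (image_adj V adj m)"
proof -
  have acyclic: "\<nexists>cs. ug_cycle V adj cs" using tree unfolding ug_tree_def by blast
  have "\<not> ug_cycle (m ` V) (image_adj V adj m) cs" for cs
  proof
    assume cy: "ug_cycle (m ` V) (image_adj V adj m) cs"
    show False
    proof (cases "x \<in> set cs")
      case False
      have "m ` V \<subseteq> V" using V unfolding m by auto
      moreover have q_adj: "adj u w" if "u \<noteq> x" "w \<noteq> x" "image_adj V adj m u w" for u w
        using that unfolding image_adj_def m by (auto split: if_splits)
      ultimately have "ug_cycle V adj cs"
        using cy False
        by (intro ug_cycle_mono[OF cy]) (auto simp: ug_cycle_iff_successively intro: q_adj)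
      then show False using acyclic by blast
    next
      case True
      then obtain ys where "ug_cycle (m ` V) (image_adj V adj m) (x # ys)"
        using ug_cycle_rotate_to[OF cy] by blast
      then show False
        using ug_cycle_through_merged_vertex[OF sym V d path m] acyclic by blast
    qed
  qed
  moreover have "ug_connected (m ` V) (image_adj V adj m)"
    using tree ug_connected_image unfolding ug_tree_def by blast
  ultimately show ?thesis using V unfolding ug_tree_def by blast
qed

definition fibre_step :: "'v set \<Rightarrow> ('v \<Rightarrow> 'v \<Rightarrow> bool) \<Rightarrow> ('v \<Rightarrow> 'w) \<Rightarrow> ('v \<times> 'v) set" where
  "fibre_step V adj h =
     {(u, w). u \<in> V \<and> w \<in> V \<and> u \<noteq> w \<and> h u = h w \<and> (\<exists>z\<in>V. adj u z \<and> adj z w)}"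

lemma rtrancl_fibre_step_imp_edges:
  assumes "(u, w) \<in> (fibre_step V adj h)\<^sup>*"
  shows "(u, w) \<in> (ug_edges V adj)\<^sup>*"
  using assms
proof (induction rule: rtrancl_induct)
  case (step w w')
  then obtain z where "(w, z) \<in> ug_edges V adj" "(z, w') \<in> ug_edges V adj"
    unfolding fibre_step_def ug_edges_def by blast
  then show ?case using step.IH by (meson rtrancl.rtrancl_into_rtrancl)
qed simp

lemma rtrancl_fibre_step_image:
  assumes "(a, b) \<in> (fibre_step V adj h)\<^sup>*" "\<And>v. h (m v) = h v"
  shows "(m a, m b) \<in> (fibre_step (m ` V) (image_adj V adj m) h)\<^sup>*"
  using assms(1)
proof (induction rule: rtrancl_induct)
  case (step b c)
  show ?case
  proof (cases "m b = m c")
    case False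
    from step.hyps(2) obtain z where "b \<in> V" "c \<in> V" "h b = h c" "z \<in> V" "adj b z" "adj z c"
      unfolding fibre_step_def by blast
    then have "(m b, m c) \<in> fibre_step (m ` V) (image_adj V adj m) h"
      using False assms(2) unfolding fibre_step_def image_adj_def by auto
    then show ?thesis using step.IH by simp
  qed (use step.IH in simp)
qed simp

text \<open>Proof by merging, one at a time, two vertices of a fibre at distance two.\<close>

lemma ug_tree_quotient:
  assumes "finite V" "ug_tree V adj" "\<And>u w. adj u w \<Longrightarrow> adj w u"
    and "\<And>u w. u \<in> V \<Longrightarrow> w \<in> V \<Longrightarrow> adj u w \<Longrightarrow> h u \<noteq> h w"
    and "\<And>u w. u \<in> V \<Longrightarrow> w \<in> V \<Longrightarrow> h u = h w \<Longrightarrow> (u, w) \<in> (fibre_step V adj h)\<^sup>*"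
  shows "ug_tree (h ` V) (image_adj V adj h)"
  using assms
proof (induction "card V" arbitrary: V adj rule: less_induct)
  case less
  show ?case
  proof (cases "inj_on h V")
    case True
    then show ?thesis using ug_tree_inj_image less.prems by blast
  next
    case False
    then obtain x y where xy: "x \<in> V" "y \<in> V" "x \<noteq> y" "h x = h y"
      unfolding inj_on_def by blast
    then have "(x, y) \<in> (fibre_step V adj h)\<^sup>+"
      using less.prems(5)[OF xy(1,2,4)] by (simp add: rtrancl_eq_or_trancl)
    then obtain w where "(x, w) \<in> fibre_step V adj h" by (meson converse_tranclE)
    then obtain z where w: "w \<in> V" "x \<noteq> w" "h x = h w" "z \<in> V" "adj x z" "adj z w"
      unfolding fibre_step_def by blast
    have z: "z \<noteq> x" "z \<noteq> w" using less.prems(4) w xy by metis+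
    define m where "m = (\<lambda>v. if v = w then x else v)"
    define V' where "V' = m ` V"
    define adj' where "adj' = image_adj V adj m"
    have tree': "ug_tree V' adj'" unfolding V'_def adj'_def
      using ug_tree_merge_distance_two[OF less.prems(2,3) xy(1) w(1,4,2) z w(5,6) m_def] .
    have V': "V' = V - {w}" unfolding V'_def m_def using xy(1) w(2) by auto
    have hm: "h (m v) = h v" for v unfolding m_def using w(3) by simp
    have sym': "adj' u u' \<Longrightarrow> adj' u' u" for u u'
      unfolding adj'_def image_adj_def using less.prems(3) by blast
    have sep': "h u \<noteq> h u'" if "u \<in> V'" "u' \<in> V'" "adj' u u'" for u u'
      using that(3) less.prems(4) hm unfolding adj'_def image_adj_def by metis
    have fibres': "(u, u') \<in> (fibre_step V' adj' h)\<^sup>*"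
      if "u \<in> V'" "u' \<in> V'" "h u = h u'" for u u'
    proof -
      have u: "u \<in> V" "u' \<in> V" "m u = u" "m u' = u'" using that V' m_def by auto
      then show ?thesis
        using rtrancl_fibre_step_image[OF less.prems(5)[OF u(1,2) that(3)] hm]
        unfolding V'_def adj'_def by simp
    qed
    have "card V' < card V" using V' less.prems(1) w(1) by (metis card_Diff1_less)
    moreover have "finite V'" using V' less.prems(1) by simp
    ultimately have "ug_tree (h ` V') (image_adj V' adj' h)"
      using less.hyps tree' sym' sep' fibres' by blast
    moreover have "h ` V' = h ` V" unfolding V'_def using hm by (auto simp: image_image)
    moreover have "image_adj V' adj' h = image_adj V adj h"
      unfolding V'_def adj'_def image_adj_def using hm by (intro ext) (auto, metis)
    ultimately show ?thesis by simp
  qed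
qed

lemma rtrancl_fibre_step_of_connected:
  assumes S: "S \<subseteq> V" "ug_connected S adj'" "\<And>x y. x \<in> S \<Longrightarrow> y \<in> S \<Longrightarrow> adj' x y \<Longrightarrow> adj x y"
    and sides: "\<And>x y. x \<in> S \<Longrightarrow> y \<in> S \<Longrightarrow> adj' x y \<Longrightarrow> x \<in> P \<longleftrightarrow> y \<notin> P"
    and const: "\<And>x y. x \<in> S \<inter> P \<Longrightarrow> y \<in> S \<inter> P \<Longrightarrow> h x = h y"
    and uw: "u \<in> S \<inter> P" "w \<in> S \<inter> P"
  shows "(u, w) \<in> (fibre_step V adj h)\<^sup>*"
proof -
  let ?R = "fibre_step V adj h"
  have "(if z \<in> P then (u, z) \<in> ?R\<^sup>* else \<exists>z'\<in>S \<inter> P. (u, z') \<in> ?R\<^sup>* \<and> adj z' z)"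
    if "(u, z) \<in> (ug_edges S adj')\<^sup>*" for z
    using that
  proof (induction rule: rtrancl_induct)
    case (step y z)
    then have yz: "y \<in> S" "z \<in> S" "adj' y z" unfolding ug_edges_def by auto
    show ?case
    proof (cases "y \<in> P")
      case True
      then show ?thesis using step.IH yz sides S(3) by auto
    next
      case False
      then obtain z' where z': "z' \<in> S \<inter> P" "(u, z') \<in> ?R\<^sup>*" "adj z' y"
        using step.IH by auto
      have "z \<in> P" using sides[OF yz] False by blast
      then have "z' = z \<or> (z', z) \<in> ?R"
        using z' yz S(1) S(3)[OF yz] const[of z' z] unfolding fibre_step_def by blast
      then show ?thesis using \<open>z \<in> P\<close> z'(2) by (auto intro: rtrancl_into_rtrancl)
    qed
  qed (use uw in simp)
  then show ?thesis using S(2) uw unfolding ug_connected_iff_edges by fastforce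
qed

fun consec_pairs :: "'v list \<Rightarrow> ('v \<times> 'v) set" where
  "consec_pairs (a # b # xs) = insert (a, b) (consec_pairs (b # xs))"
| "consec_pairs _ = {}"

lemma successively_iff_consec_pairs:
  "successively adj xs \<longleftrightarrow> (\<forall>(a, b)\<in>consec_pairs xs. adj a b)"
  by (induction xs rule: consec_pairs.induct) auto

lemma consec_pairs_append:
  "consec_pairs (xs @ y # ys) = consec_pairs (xs @ [y]) \<union> consec_pairs (y # ys)"
  by (induction xs rule: induct_list012) auto

lemma consec_pairs_Cons: "xs \<noteq> [] \<Longrightarrow> consec_pairs (x # xs) = insert (x, hd xs) (consec_pairs xs)"
  by (cases xs) auto

lemma consec_pairs_snoc:
  "consec_pairs (xs @ [x]) = consec_pairs xs \<union> (if xs = [] then {} else {(last xs, x)})"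
  by (induction xs rule: induct_list012) auto

lemma consec_pairs_in_set: "(a, b) \<in> consec_pairs xs \<Longrightarrow> a \<in> set xs \<and> b \<in> set xs"
  by (induction xs rule: consec_pairs.induct) auto

lemma consec_pairs_rev: "(a, b) \<in> consec_pairs (rev xs) \<Longrightarrow> (b, a) \<in> consec_pairs xs"
proof (induction xs)
  case (Cons x xs)
  then show ?case
    using consec_pairs_snoc[of "rev xs" x] by (cases "xs = []") (auto simp: last_rev consec_pairs_Cons)
qed simp

definition ug_walk :: "'v set \<Rightarrow> ('v \<Rightarrow> 'v \<Rightarrow> bool) \<Rightarrow> 'v list \<Rightarrow> bool" where
  "ug_walk V adj xs \<longleftrightarrow> xs \<noteq> [] \<and> set xs \<subseteq> V \<and> (\<forall>(a, b)\<in>consec_pairs xs. adj a b)"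

lemma ug_walk_mono: "ug_walk V adj xs \<Longrightarrow> V \<subseteq> V' \<Longrightarrow> ug_walk V' adj xs"
  unfolding ug_walk_def by auto

lemma ug_walk_rev:
  "ug_walk V adj xs \<Longrightarrow> (\<And>u w. adj u w \<Longrightarrow> adj w u) \<Longrightarrow> ug_walk V adj (rev xs)"
  unfolding ug_walk_def using consec_pairs_rev by fastforce

lemma ug_walk_of_rtrancl:
  assumes "(u, w) \<in> (ug_edges V adj)\<^sup>*" "u \<in> V"
  obtains xs where "ug_walk V adj xs" "hd xs = u" "last xs = w"
  using assms
proof (induction arbitrary: thesis rule: rtrancl_induct)
  case base
  then show ?case by (auto simp: ug_walk_def intro: base(1)[of "[u]"])
next
  case (step y z)
  obtain xs where xs: "ug_walk V adj xs" "hd xs = u" "last xs = y"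
    using step.IH step.prems(2) by blast
  have yz: "y \<in> V" "z \<in> V" "adj y z" using step.hyps(2) unfolding ug_edges_def by auto
  have "xs \<noteq> []" using xs(1) unfolding ug_walk_def by simp
  then have "ug_walk V adj (xs @ [z])" "hd (xs @ [z]) = u"
    using xs yz by (auto simp: ug_walk_def consec_pairs_snoc)
  then show ?case using step.prems(1) by simp
qed

lemma rtrancl_of_ug_walk: "ug_walk V adj xs \<Longrightarrow> (hd xs, last xs) \<in> (ug_edges V adj)\<^sup>*"
proof (induction xs)
  case (Cons x xs)
  show ?case
  proof (cases "xs = []")
    case False
    then have "ug_walk V adj xs" "(x, hd xs) \<in> ug_edges V adj"
      using Cons.prems unfolding ug_walk_def ug_edges_def by (auto simp: consec_pairs_Cons)
    then show ?thesis using Cons.IH False by (simp add: converse_rtrancl_into_rtrancl)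
  qed simp
qed (simp add: ug_walk_def)

lemma ug_walk_obtain_distinct:
  assumes "ug_walk V adj xs"
  obtains ys where "ug_walk V adj ys" "distinct ys" "hd ys = hd xs" "last ys = last xs"
    "set ys \<subseteq> set xs" "consec_pairs ys \<subseteq> consec_pairs xs"
  using assms
proof (induction "length xs" arbitrary: xs thesis rule: less_induct)
  case less
  show ?case
  proof (cases "distinct xs")
    case False
    then obtain A y B C where xs: "xs = A @ [y] @ B @ [y] @ C"
      using not_distinct_decomp by blast
    define xs' where "xs' = A @ y # C"
    have pairs: "consec_pairs xs' \<subseteq> consec_pairs xs"
      unfolding xs xs'_def
      using consec_pairs_append[of A y C] consec_pairs_append[of A y "B @ y # C"]
        consec_pairs_append[of "y # B" y C] by auto
    have set: "set xs' \<subseteq> set xs" unfolding xs xs'_def by auto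
    have ends: "hd xs' = hd xs" "last xs' = last xs"
      unfolding xs xs'_def by (cases A; simp) (cases C; simp)
    have len: "length xs' < length xs" unfolding xs xs'_def by simp
    have "ug_walk V adj xs'"
      using less.prems(2) pairs set unfolding ug_walk_def xs'_def by auto
    then obtain ys where "ug_walk V adj ys" "distinct ys" "hd ys = hd xs'" "last ys = last xs'"
      "set ys \<subseteq> set xs'" "consec_pairs ys \<subseteq> consec_pairs xs'"
      using less.hyps[OF len] by blast
    then show ?thesis using less.prems(1) pairs set ends by auto
  qed (use less.prems in blast)
qed

lemma acyclic_walk_visits_successor:
  assumes acyclic: "\<nexists>cs. ug_cycle V adj cs" and sym: "\<And>u w. adj u w \<Longrightarrow> adj w u"
    and P: "ug_walk V adj (x # x2 # rest)" "distinct (x # x2 # rest)"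
    and W: "ug_walk V adj W" "hd W = x" "last W = last (x2 # rest)"
  shows "x2 \<in> set W"
proof (rule ccontr)
  assume x2: "x2 \<notin> set W"
  let ?P2 = "x2 # rest"
  obtain B where B: "?P2 = B @ [last ?P2]" by (metis append_butlast_last_id list.distinct(1))
  have "W \<noteq> []" using W(1) by (simp add: ug_walk_def)
  then obtain T where rW: "rev W = last ?P2 # T" using W(3) by (cases "rev W") (auto simp: last_rev)
  define Z where "Z = B @ rev W"
  have pairs_Z: "consec_pairs Z = consec_pairs ?P2 \<union> consec_pairs (rev W)"
    unfolding Z_def rW using consec_pairs_append[of B "last ?P2" T] B by simp
  have walks: "ug_walk V adj ?P2" "ug_walk V adj (rev W)"
    using P(1) ug_walk_rev[OF W(1) sym] by (auto simp: ug_walk_def)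
  have "set B \<subseteq> set ?P2" using arg_cong[OF B, of set] by auto
  then have "set Z \<subseteq> V" using walks unfolding Z_def ug_walk_def by auto
  moreover have "Z \<noteq> []" unfolding Z_def using \<open>W \<noteq> []\<close> by simp
  ultimately have wZ: "ug_walk V adj Z" using walks pairs_Z unfolding ug_walk_def by blast
  have hZ: "hd Z = x2" using B rW unfolding Z_def by (cases B) auto
  have lZ: "last Z = x" using W(2) \<open>W \<noteq> []\<close> unfolding Z_def by (simp add: last_rev)
  obtain Z' where Z': "ug_walk V adj Z'" "distinct Z'" "hd Z' = hd Z" "last Z' = last Z"
    "consec_pairs Z' \<subseteq> consec_pairs Z"
    by (rule ug_walk_obtain_distinct[OF wZ])
  note Z' = Z'(1,2) Z'(3)[unfolded hZ] Z'(4)[unfolded lZ] Z'(5)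
  have "adj x x2" using P(1) by (simp add: ug_walk_def)
  have "x \<noteq> x2" using P(2) by auto
  show False
  proof (cases "3 \<le> length Z'")
    case True
    then have "ug_cycle V adj Z'"
      using Z' \<open>adj x x2\<close> successively_iff_consec_pairs[of adj Z']
      by (auto simp: ug_walk_def ug_cycle_iff_successively)
    then show False using acyclic by blast
  next
    case False
    moreover have "Z' \<noteq> []" "length Z' \<noteq> 1"
      using Z'(1,3,4) \<open>x \<noteq> x2\<close> by (auto simp: ug_walk_def length_Suc_conv)
    ultimately have "length Z' = 2" using False length_greater_0_conv[of Z'] by linarith
    then obtain c d where "Z' = [c, d]" by (auto simp: numeral_2_eq_2 length_Suc_conv)
    then have "Z' = [x2, x]" using Z'(3,4) by simp
    then have "(x2, x) \<in> consec_pairs ?P2 \<or> (x2, x) \<in> consec_pairs (rev W)"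
      using Z'(5) pairs_Z by auto
    then show False using P(2) x2 consec_pairs_in_set by fastforce
  qed
qed

lemma distinct_walk_subset_walk:
  assumes acyclic: "\<nexists>cs. ug_cycle V adj cs" and sym: "\<And>u w. adj u w \<Longrightarrow> adj w u"
  shows "ug_walk V adj P \<Longrightarrow> distinct P \<Longrightarrow> ug_walk V adj W \<Longrightarrow> hd W = hd P \<Longrightarrow>
    last W = last P \<Longrightarrow> set P \<subseteq> set W"
proof (induction P arbitrary: W rule: induct_list012)
  case (2 x)
  then show ?case using hd_in_set[of W] by (auto simp: ug_walk_def)
next
  case (3 x x2 rest)
  have "W \<noteq> []" using "3.prems"(3) by (simp add: ug_walk_def)
  then have x: "x \<in> set W" using "3.prems"(4) hd_in_set by fastforce
  have "x2 \<in> set W"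
    using acyclic_walk_visits_successor[OF acyclic sym "3.prems"(1,2,3)] "3.prems"(4,5) by simp
  then obtain W1 W2 where W: "W = W1 @ x2 # W2" by (meson split_list)
  then have "consec_pairs (x2 # W2) \<subseteq> consec_pairs W"
    using consec_pairs_append[of W1 x2 W2] by blast
  then have "ug_walk V adj (x2 # W2)" using "3.prems"(3) unfolding ug_walk_def W by auto
  moreover have "ug_walk V adj (x2 # rest)" using "3.prems"(1) by (auto simp: ug_walk_def)
  moreover have "last (x2 # W2) = last (x2 # rest)" using "3.prems"(5) W by simp
  ultimately have "set (x2 # rest) \<subseteq> set (x2 # W2)"
    using "3.IH"(2) "3.prems"(2) by (metis distinct.simps(2) list.sel(1))
  then show ?case using x W by auto
qed (simp add: ug_walk_def)

text \<open>In a forest, the unique path between two vertices lies in every connected set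
  containing both.\<close>

lemma ug_connected_Int:
  assumes acyclic: "\<nexists>cs. ug_cycle V adj cs" and sym: "\<And>u w. adj u w \<Longrightarrow> adj w u"
    and S: "S1 \<subseteq> V" "S2 \<subseteq> V" and conn: "ug_connected S1 adj" "ug_connected S2 adj"
  shows "ug_connected (S1 \<inter> S2) adj"
  unfolding ug_connected_iff_edges
proof (intro ballI)
  fix u w assume uw: "u \<in> S1 \<inter> S2" "w \<in> S1 \<inter> S2"
  obtain W1 where W1: "ug_walk S1 adj W1" "hd W1 = u" "last W1 = w"
    using ug_walk_of_rtrancl[of u w S1 adj] conn(1) uw unfolding ug_connected_iff_edges by blast
  obtain P where P: "ug_walk S1 adj P" "distinct P" "hd P = hd W1" "last P = last W1"
    by (rule ug_walk_obtain_distinct[OF W1(1)])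
  note P = P(1,2) P(3)[unfolded W1(2)] P(4)[unfolded W1(3)]
  obtain W2 where W2: "ug_walk S2 adj W2" "hd W2 = u" "last W2 = w"
    using ug_walk_of_rtrancl[of u w S2 adj] conn(2) uw unfolding ug_connected_iff_edges by blast
  have "set P \<subseteq> set W2"
    using distinct_walk_subset_walk[OF acyclic sym ug_walk_mono[OF P(1) S(1)] P(2)
        ug_walk_mono[OF W2(1) S(2)]] P W2 by simp
  then have "ug_walk (S1 \<inter> S2) adj P" using P(1) W2(1) unfolding ug_walk_def by auto
  then show "(u, w) \<in> (ug_edges (S1 \<inter> S2) adj)\<^sup>*" using rtrancl_of_ug_walk P by fastforce
qed

section \<open>Bipartite graphs given by their edge sets\<close>

definition bip_vertices :: "('a \<times> 'b) set \<Rightarrow> ('a + 'b) set" where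
  "bip_vertices E = Inl ` fst ` E \<union> Inr ` snd ` E"

abbreviation bip_connected :: "('a \<times> 'b) set \<Rightarrow> bool" where
  "bip_connected E \<equiv> ug_connected (bip_vertices E) (bip_adj E)"

abbreviation bip_edge_tree :: "('a \<times> 'b) set \<Rightarrow> bool" where
  "bip_edge_tree E \<equiv> ug_tree (bip_vertices E) (bip_adj E)"

lemma bip_tree_iff_edge_tree: "bip_tree (fst ` E) (snd ` E) E \<longleftrightarrow> bip_edge_tree E"
  unfolding bip_tree_def bip_vertices_def by simp

lemma Inl_in_bip_vertices: "Inl a \<in> bip_vertices E \<longleftrightarrow> (\<exists>b. (a, b) \<in> E)"
  unfolding bip_vertices_def by force

lemma Inr_in_bip_vertices: "Inr b \<in> bip_vertices E \<longleftrightarrow> (\<exists>a. (a, b) \<in> E)"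
  unfolding bip_vertices_def by force

lemma bip_vertices_mono: "E \<subseteq> E' \<Longrightarrow> bip_vertices E \<subseteq> bip_vertices E'"
  unfolding bip_vertices_def by auto

lemma finite_bip_vertices: "finite E \<Longrightarrow> finite (bip_vertices E)"
  unfolding bip_vertices_def by simp

lemma bip_adj_sym: "bip_adj E u w \<Longrightarrow> bip_adj E w u"
  by (cases u; cases w) auto

lemma bip_adj_mono: "E \<subseteq> E' \<Longrightarrow> bip_adj E u w \<Longrightarrow> bip_adj E' u w"
  by (cases u; cases w) auto

lemma bip_adj_Inl_iff: "bip_adj E u w \<Longrightarrow> u \<in> range Inl \<longleftrightarrow> w \<notin> range Inl"
  by (cases u; cases w) auto

lemma bip_adj_Inr_iff: "bip_adj E u w \<Longrightarrow> u \<in> range Inr \<longleftrightarrow> w \<notin> range Inr"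
  by (cases u; cases w) auto

lemma bip_adj_restrict:
  assumes "u \<in> bip_vertices (G \<inter> A \<times> B)" "w \<in> bip_vertices (G \<inter> A \<times> B)"
  shows "bip_adj (G \<inter> A \<times> B) u w = bip_adj G u w"
  using assms unfolding bip_vertices_def by (cases u; cases w) auto

lemma bip_connected_restrict_iff:
  "bip_connected (G \<inter> A \<times> B) \<longleftrightarrow> ug_connected (bip_vertices (G \<inter> A \<times> B)) (bip_adj G)"
proof -
  have "ug_edges (bip_vertices (G \<inter> A \<times> B)) (bip_adj (G \<inter> A \<times> B)) =
    ug_edges (bip_vertices (G \<inter> A \<times> B)) (bip_adj G)"
    unfolding ug_edges_def using bip_adj_restrict by blast
  then show ?thesis by (simp add: ug_connected_iff_edges)
qed

lemma bip_edge_tree_subset: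
  assumes "bip_edge_tree G" "E \<subseteq> G" "E \<noteq> {}" "bip_connected E"
  shows "bip_edge_tree E"
proof -
  have "ug_cycle (bip_vertices G) (bip_adj G) cs" if "ug_cycle (bip_vertices E) (bip_adj E) cs" for cs
    using that bip_vertices_mono[OF assms(2)] bip_adj_mono[OF assms(2)]
    by (intro ug_cycle_mono[OF that]) (auto simp: ug_cycle_iff_successively)
  moreover have "bip_vertices E \<noteq> {}" using assms(3) unfolding bip_vertices_def by auto
  ultimately show ?thesis using assms(1,4) unfolding ug_tree_def by blast
qed

lemma bip_connected_Int:
  assumes tree: "bip_edge_tree G"
    and "bip_connected (G \<inter> A \<times> UNIV)" "bip_connected (G \<inter> UNIV \<times> B)"
  shows "bip_connected (G \<inter> A \<times> B)"
proof -
  have "ug_connected (bip_vertices (G \<inter> A \<times> UNIV) \<inter> bip_vertices (G \<inter> UNIV \<times> B)) (bip_adj G)"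
    using tree assms(2,3) bip_connected_restrict_iff
    by (intro ug_connected_Int[OF _ bip_adj_sym]) (auto simp: ug_tree_def bip_vertices_def)
  moreover have "bip_vertices (G \<inter> A \<times> UNIV) \<inter> bip_vertices (G \<inter> UNIV \<times> B) =
      bip_vertices (G \<inter> A \<times> B)"
    unfolding bip_vertices_def by force
  ultimately show ?thesis by (simp add: bip_connected_restrict_iff)
qed

lemma bip_connected_single_Inl:
  assumes "\<And>a b a' b'. (a, b) \<in> E \<Longrightarrow> (a', b') \<in> E \<Longrightarrow> a = a'"
  shows "bip_connected E"
proof (cases "E = {}")
  case False
  then obtain a b where ab: "(a, b) \<in> E" by auto
  show ?thesis
  proof (rule ug_connected_star[of "Inl a"])
    show "Inl a \<in> bip_vertices E" using ab by (auto simp: Inl_in_bip_vertices)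
    fix u assume u: "u \<in> bip_vertices E" "u \<noteq> Inl a"
    then obtain a' b' where "u = Inr b'" "(a', b') \<in> E"
      using assms[OF ab] unfolding bip_vertices_def by force
    then show "bip_adj E u (Inl a) \<and> bip_adj E (Inl a) u" using assms[OF ab] by auto
  qed
qed (simp add: ug_connected_def bip_vertices_def)

lemma bip_connected_single_Inr:
  assumes "\<And>a b a' b'. (a, b) \<in> E \<Longrightarrow> (a', b') \<in> E \<Longrightarrow> b = b'"
  shows "bip_connected E"
proof (cases "E = {}")
  case False
  then obtain a b where ab: "(a, b) \<in> E" by auto
  show ?thesis
  proof (rule ug_connected_star[of "Inr b"])
    show "Inr b \<in> bip_vertices E" using ab by (auto simp: Inr_in_bip_vertices)
    fix u assume u: "u \<in> bip_vertices E" "u \<noteq> Inr b"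
    then obtain a' b' where "u = Inl a'" "(a', b') \<in> E"
      using assms[OF ab] unfolding bip_vertices_def by force
    then show "bip_adj E u (Inr b) \<and> bip_adj E (Inr b) u" using assms[OF ab] by auto
  qed
qed (simp add: ug_connected_def bip_vertices_def)

lemma fst_image_map_prod: "fst ` map_prod f g ` E = f ` fst ` E"
  by force

lemma snd_image_map_prod: "snd ` map_prod f g ` E = g ` snd ` E"
  by force

lemma bip_vertices_image_map_prod: "map_sum f g ` bip_vertices E = bip_vertices (map_prod f g ` E)"
  unfolding bip_vertices_def by force

lemma image_adj_bip_adj:
  "image_adj (bip_vertices E) (bip_adj E) (map_sum f g) = bip_adj (map_prod f g ` E)"
proof (intro ext iffI)
  fix c d
  assume "image_adj (bip_vertices E) (bip_adj E) (map_sum f g) c d"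
  then obtain u w where "bip_adj E u w" "map_sum f g u = c" "map_sum f g w = d"
    unfolding image_adj_def by blast
  then show "bip_adj (map_prod f g ` E) c d"
    by (cases u; cases w) force+
next
  fix c d
  assume cd: "bip_adj (map_prod f g ` E) c d"
  then obtain a b where ab: "(a, b) \<in> E"
    and cd: "(c, d) = (Inl (f a), Inr (g b)) \<or> (c, d) = (Inr (g b), Inl (f a))"
    by (cases c; cases d) auto
  have "Inl a \<in> bip_vertices E" "Inr b \<in> bip_vertices E"
    using ab by (auto simp: Inl_in_bip_vertices Inr_in_bip_vertices)
  then show "image_adj (bip_vertices E) (bip_adj E) (map_sum f g) c d"
    using ab cd unfolding image_adj_def by (elim disjE) force+
qed

lemma rtrancl_fibre_step_Inl:
  assumes "bip_connected E" "E \<subseteq> H" "\<And>a b. (a, b) \<in> E \<Longrightarrow> f a = c"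
    and "Inl a1 \<in> bip_vertices E" "Inl a2 \<in> bip_vertices E"
  shows "(Inl a1, Inl a2) \<in> (fibre_step (bip_vertices H) (bip_adj H) (map_sum f g))\<^sup>*"
proof (rule rtrancl_fibre_step_of_connected[where S = "bip_vertices E" and adj' = "bip_adj E"
      and P = "range Inl"])
  show "map_sum f g x = map_sum f g y" 
    if xy: "x \<in> bip_vertices E \<inter> range Inl" "y \<in> bip_vertices E \<inter> range Inl" for x y
  proof -
    obtain a a' where "x = Inl a" "y = Inl a'" "Inl a \<in> bip_vertices E" "Inl a' \<in> bip_vertices E"
      using xy by blast
    then show ?thesis using assms(3) by (auto simp: Inl_in_bip_vertices)
  qed
  show "x \<in> range Inl \<longleftrightarrow> y \<notin> range Inl"
    if "x \<in> bip_vertices E" "y \<in> bip_vertices E" "bip_adj E x y" for x y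
    using that(3) by (rule bip_adj_Inl_iff)
qed (use assms bip_vertices_mono[OF assms(2)] bip_adj_mono[OF assms(2)] in auto)

lemma rtrancl_fibre_step_Inr:
  assumes "bip_connected E" "E \<subseteq> H" "\<And>a b. (a, b) \<in> E \<Longrightarrow> g b = d"
    and "Inr b1 \<in> bip_vertices E" "Inr b2 \<in> bip_vertices E"
  shows "(Inr b1, Inr b2) \<in> (fibre_step (bip_vertices H) (bip_adj H) (map_sum f g))\<^sup>*"
proof (rule rtrancl_fibre_step_of_connected[where S = "bip_vertices E" and adj' = "bip_adj E"
      and P = "range Inr"])
  show "map_sum f g x = map_sum f g y" 
    if xy: "x \<in> bip_vertices E \<inter> range Inr" "y \<in> bip_vertices E \<inter> range Inr" for x y
  proof -
    obtain a a' where "x = Inr a" "y = Inr a'" "Inr a \<in> bip_vertices E" "Inr a' \<in> bip_vertices E"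
      using xy by blast
    then show ?thesis using assms(3) by (auto simp: Inr_in_bip_vertices)
  qed
  show "x \<in> range Inr \<longleftrightarrow> y \<notin> range Inr"
    if "x \<in> bip_vertices E" "y \<in> bip_vertices E" "bip_adj E x y" for x y
    using that(3) by (rule bip_adj_Inr_iff)
qed (use assms bip_vertices_mono[OF assms(2)] bip_adj_mono[OF assms(2)] in auto)
section \<open>Longest common prefixes and suffixes\<close>

lemma prefix_lcp1: "prefix (lcp xs ys) xs"
  by (induction xs ys rule: lcp.induct) auto

lemma prefix_lcp2: "prefix (lcp xs ys) ys"
  by (induction xs ys rule: lcp.induct) auto

lemma prefix_lcp_greatest: "prefix t xs \<Longrightarrow> prefix t ys \<Longrightarrow> prefix t (lcp xs ys)"
proof (induction xs ys arbitrary: t rule: lcp.induct)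
  case (1 x xs y ys)
  then show ?case by (cases t) auto
qed auto

lemma suffix_lcs1: "suffix (lcs xs ys) xs"
  unfolding lcs_def suffix_to_prefix using prefix_lcp1 by simp

lemma suffix_lcs2: "suffix (lcs xs ys) ys"
  unfolding lcs_def suffix_to_prefix using prefix_lcp2 by simp

lemma suffix_lcs_greatest: "suffix t xs \<Longrightarrow> suffix t ys \<Longrightarrow> suffix t (lcs xs ys)"
  unfolding lcs_def suffix_to_prefix using prefix_lcp_greatest by simp

lemma prefix_all_if_shortest_lcp:
  assumes "x \<in> A" "prefix t (w x)" "a \<in> A"
    and shortest: "\<And>y z. y \<in> A \<Longrightarrow> z \<in> A \<Longrightarrow> y \<noteq> z \<Longrightarrow> length t \<le> length (lcp (w y) (w z))"
  shows "prefix t (w a)"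
proof (cases "a = x")
  case False
  then have "prefix t (lcp (w a) (w x))"
    using assms prefix_lcp2 prefix_length_prefix by blast
  then show ?thesis using prefix_lcp1 prefix_order.trans by blast
qed (use assms in simp)

lemma suffix_all_if_shortest_lcs:
  assumes "x \<in> A" "suffix t (w x)" "a \<in> A"
    and shortest: "\<And>y z. y \<in> A \<Longrightarrow> z \<in> A \<Longrightarrow> y \<noteq> z \<Longrightarrow> length t \<le> length (lcs (w y) (w z))"
  shows "suffix t (w a)"
  using prefix_all_if_shortest_lcp[of x A "rev t" "rev \<circ> w" a] assms
  unfolding suffix_to_prefix lcs_def by simp

lemma ex_lcp_common_prefix:
  assumes "e1 \<in> A" "e2 \<in> A" "e1 \<noteq> e2"
  shows "\<exists>x1\<in>A. \<exists>x2\<in>A. x1 \<noteq> x2 \<and> (\<forall>a\<in>A. prefix (lcp (w x1) (w x2)) (w a))"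
proof -
  define P where "P t \<longleftrightarrow> (\<exists>x1\<in>A. \<exists>x2\<in>A. x1 \<noteq> x2 \<and> t = lcp (w x1) (w x2))" for t
  define t where "t = arg_min length P"
  have "P (lcp (w e1) (w e2))" unfolding P_def using assms by blast
  then have "P t" and shortest: "\<And>t'. P t' \<Longrightarrow> length t \<le> length t'"
    using arg_min_nat_lemma[of P _ length] unfolding t_def by auto
  then obtain x1 x2 where x: "x1 \<in> A" "x2 \<in> A" "x1 \<noteq> x2" "t = lcp (w x1) (w x2)"
    unfolding P_def by blast
  have "prefix t (w a)" if "a \<in> A" for a
  proof (rule prefix_all_if_shortest_lcp[OF x(1) _ that])
    show "prefix t (w x1)" unfolding x(4) by (rule prefix_lcp1)
  qed (use shortest P_def in blast)
  then show ?thesis using x by blast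
qed

lemma ex_lcs_common_suffix:
  assumes "e1 \<in> A" "e2 \<in> A" "e1 \<noteq> e2"
  shows "\<exists>x1\<in>A. \<exists>x2\<in>A. x1 \<noteq> x2 \<and> (\<forall>a\<in>A. suffix (lcs (w x1) (w x2)) (w a))"
  using ex_lcp_common_prefix[OF assms, of "rev \<circ> w"] unfolding suffix_to_prefix lcs_def by simp

section \<open>Bi-infinite words, image sequences and extensions\<close>

lemma occurs_at_append:
  "occurs_at (A @ B) y p \<longleftrightarrow> occurs_at A y p \<and> occurs_at B y (p + int (length A))"
proof
  assume h: "occurs_at (A @ B) y p"
  have "y (p + int k) = A ! k" if "k < length A" for k
    using h that unfolding occurs_at_def by (metis length_append nth_append trans_less_add1)
  moreover have "y (p + int (length A) + int k) = B ! k" if "k < length B" for k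
    using h that unfolding occurs_at_def
    by (metis add.assoc length_append nat_add_left_cancel_less nth_append_length_plus of_nat_add)
  ultimately show "occurs_at A y p \<and> occurs_at B y (p + int (length A))"
    unfolding occurs_at_def by blast
next
  assume h: "occurs_at A y p \<and> occurs_at B y (p + int (length A))"
  show "occurs_at (A @ B) y p"
    unfolding occurs_at_def
  proof (intro allI impI)
    fix k assume k: "k < length (A @ B)"
    show "y (p + int k) = (A @ B) ! k"
    proof (cases "k < length A")
      case False
      then obtain k' where k': "k = length A + k'" by (metis le_iff_add not_less)
      then have "y (p + int (length A) + int k') = B ! k'" using h k unfolding occurs_at_def by simp
      then show ?thesis using k' by (simp add: nth_append add.assoc)
    qed (use h in \<open>simp add: occurs_at_def nth_append\<close>)
  qed
qed

lemma occurs_at_Cons: "occurs_at (a # w) y p \<longleftrightarrow> y p = a \<and> occurs_at w y (p + 1)"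
  using occurs_at_append[of "[a]" w y p] by (simp add: occurs_at_def)

lemma occurs_at_nth: "occurs_at w y p \<Longrightarrow> k < length w \<Longrightarrow> y (p + int k) = w ! k"
  unfolding occurs_at_def by blast

lemma occurs_at_shift: "occurs_at w (\<lambda>n. y (n + k)) i \<longleftrightarrow> occurs_at w y (i + k)"
  unfolding occurs_at_def by (simp add: ac_simps)

lemma img_pos_0 [simp]: "img_pos \<sigma> x 0 = 0"
  by (simp add: img_pos_def)

lemma img_pos_succ: "img_pos \<sigma> x (i + 1) = img_pos \<sigma> x i + int (length (\<sigma> (x i)))"
proof (cases "i \<ge> 0")
  case True
  then have "nat (i + 1) = Suc (nat i)" by simp
  then show ?thesis unfolding img_pos_def using True by simp
next
  case False
  define n where "n = nat (- i)"
  then have n: "n \<ge> 1" "i = - int n" using False by auto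
  define f where "f = (\<lambda>j::nat. length (\<sigma> (x (- int j))))"
  have ip: "img_pos \<sigma> x i = - int (sum f {1..n})"
    unfolding img_pos_def f_def n_def using False by simp
  have ip1: "img_pos \<sigma> x (i + 1) = - int (sum f {1..n - 1})"
  proof (cases "i + 1 \<ge> 0")
    case True
    then have "i + 1 = 0" "n - 1 = 0" using n by simp_all
    then show ?thesis by simp
  next
    case False
    then have "nat (- (i + 1)) = n - 1" using n by simp
    then show ?thesis unfolding img_pos_def f_def using False by simp
  qed
  obtain m where m: "n = Suc m" using n(1) by (cases n) auto
  have "sum f {1..n} = sum f {1..n - 1} + f n" unfolding m by simp
  moreover have "f n = length (\<sigma> (x i))" unfolding f_def using n by simp
  ultimately show ?thesis using ip ip1 by simp
qed

context
  fixes \<sigma> :: "'a \<Rightarrow> 'b list"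
  assumes nonerasing: "\<And>a. \<sigma> a \<noteq> []"
begin

lemma img_pos_add_ge: "img_pos \<sigma> x i + int k \<le> img_pos \<sigma> x (i + int k)"
proof (induction k)
  case (Suc k)
  have e: "i + int (Suc k) = (i + int k) + 1" by simp
  have "img_pos \<sigma> x (i + int (Suc k)) = img_pos \<sigma> x (i + int k) + int (length (\<sigma> (x (i + int k))))"
    unfolding e by (rule img_pos_succ)
  moreover have "length (\<sigma> (x (i + int k))) \<ge> 1" using nonerasing by (simp add: Suc_leI)
  ultimately show ?case using Suc by simp
qed simp

lemma img_pos_mono: "i \<le> j \<Longrightarrow> img_pos \<sigma> x i \<le> img_pos \<sigma> x j"
  using img_pos_add_ge[of x i "nat (j - i)"] by simp

lemma img_pos_block_unique:
  assumes "img_pos \<sigma> x j \<le> n" "n < img_pos \<sigma> x (j + 1)"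
    and "img_pos \<sigma> x i \<le> n" "n < img_pos \<sigma> x (i + 1)"
  shows "i = j"
  using img_pos_mono[of "i + 1" j x] img_pos_mono[of "j + 1" i x] assms by force

lemma img_pos_block_ex: "\<exists>j. img_pos \<sigma> x j \<le> n \<and> n < img_pos \<sigma> x (j + 1)"
proof -
  define j0 where "j0 = min n 0"
  have j0: "img_pos \<sigma> x j0 \<le> n"
  proof (cases "n \<ge> 0")
    case False
    then show ?thesis using img_pos_add_ge[of x n "nat (- n)"] unfolding j0_def by simp
  qed (simp add: j0_def)
  define S where "S = {k::nat. img_pos \<sigma> x (j0 + int k) \<le> n}"
  have "S \<subseteq> {..nat (n - img_pos \<sigma> x j0)}"
  proof
    fix k assume "k \<in> S"
    then show "k \<in> {..nat (n - img_pos \<sigma> x j0)}"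
      using img_pos_add_ge[of x j0 k] unfolding S_def by simp
  qed
  then have fin: "finite S" using finite_subset by blast
  have "0 \<in> S" unfolding S_def using j0 by simp
  then have K: "Max S \<in> S" using fin by (intro Max_in) auto
  have "Suc (Max S) \<notin> S" using Max_ge[OF fin, of "Suc (Max S)"] by auto
  moreover have "j0 + int (Suc (Max S)) = j0 + int (Max S) + 1" by simp
  ultimately have "n < img_pos \<sigma> x (j0 + int (Max S) + 1)" unfolding S_def by (simp only: mem_Collect_eq)
  then show ?thesis using K unfolding S_def by blast
qed

lemma ex_image_seq: "\<exists>y. is_image_seq \<sigma> x y"
proof -
  define blk where "blk n = (SOME j. img_pos \<sigma> x j \<le> n \<and> n < img_pos \<sigma> x (j + 1))" for n
  have blk: "img_pos \<sigma> x (blk n) \<le> n \<and> n < img_pos \<sigma> x (blk n + 1)" for n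
    unfolding blk_def using img_pos_block_ex[of x n] by (rule someI_ex)
  have "is_image_seq \<sigma> x (\<lambda>n. \<sigma> (x (blk n)) ! nat (n - img_pos \<sigma> x (blk n)))"
    unfolding is_image_seq_def
  proof (intro allI impI)
    fix i k assume "k < length (\<sigma> (x i))"
    then have "img_pos \<sigma> x i \<le> img_pos \<sigma> x i + int k"
      "img_pos \<sigma> x i + int k < img_pos \<sigma> x (i + 1)"
      using img_pos_succ[of \<sigma> x i] by auto
    then have "blk (img_pos \<sigma> x i + int k) = i" using img_pos_block_unique blk by blast
    then show "\<sigma> (x (blk (img_pos \<sigma> x i + int k))) ! nat (img_pos \<sigma> x i + int k -
        img_pos \<sigma> x (blk (img_pos \<sigma> x i + int k))) = \<sigma> (x i) ! k"
      by simp
  qed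
  then show ?thesis by blast
qed

end

lemma lang_image_shiftI:
  assumes "\<And>a. \<sigma> a \<noteq> []" "x \<in> X" "is_image_seq \<sigma> x y" "occurs_at w y i"
  shows "w \<in> lang (image_shift \<sigma> X)"
proof -
  have "y \<in> image_shift \<sigma> X"
    unfolding image_shift_def using assms(1)[of "x 0"] assms(2,3)
    by (intro CollectI exI[of _ x] exI[of _ y] exI[of _ 0]) auto
  then show ?thesis using assms(4) unfolding lang_def by blast
qed

lemma lang_image_shiftD:
  assumes "w \<in> lang (image_shift \<sigma> X)"
  obtains x y i where "x \<in> X" "is_image_seq \<sigma> x y" "occurs_at w y i"
proof -
  obtain z i where z: "z \<in> image_shift \<sigma> X" "occurs_at w z i"
    using assms unfolding lang_def by blast
  then obtain x y k where xy: "z = (\<lambda>n. y (n + int k))" "x \<in> X" "is_image_seq \<sigma> x y"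
    unfolding image_shift_def by blast
  then have "occurs_at w y (i + int k)" using z(2) occurs_at_shift[of w y "int k" i] by simp
  then show ?thesis using xy(2,3) by (rule that[rotated 2])
qed

lemma morph_Nil [simp]: "morph \<sigma> [] = []"
  unfolding morph_def by simp

lemma morph_Cons: "morph \<sigma> (a # w) = \<sigma> a @ morph \<sigma> w"
  unfolding morph_def by simp

lemma occurs_at_image_seq:
  assumes "is_image_seq \<sigma> x y"
  shows "occurs_at (morph \<sigma> (map (\<lambda>t. x (i + int t)) [0..<m])) y (img_pos \<sigma> x i) \<and>
    img_pos \<sigma> x (i + int m) =
      img_pos \<sigma> x i + int (length (morph \<sigma> (map (\<lambda>t. x (i + int t)) [0..<m])))"
proof (induction m)
  case (Suc m)
  let ?ws = "map (\<lambda>t. x (i + int t)) [0..<m]"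
  have e: "i + int (Suc m) = (i + int m) + 1" by simp
  have "occurs_at (\<sigma> (x (i + int m))) y (img_pos \<sigma> x (i + int m))"
    using assms unfolding is_image_seq_def occurs_at_def by blast
  moreover have "img_pos \<sigma> x (i + int (Suc m)) =
      img_pos \<sigma> x (i + int m) + int (length (\<sigma> (x (i + int m))))"
    unfolding e by (rule img_pos_succ)
  moreover have "morph \<sigma> (?ws @ [x (i + int m)]) = morph \<sigma> ?ws @ \<sigma> (x (i + int m))"
    by (simp add: morph_def)
  ultimately show ?case using Suc.IH by (simp add: occurs_at_append)
qed (simp add: occurs_at_def)

lemma Cons_in_lang_iff: "c # u \<in> lang Z \<longleftrightarrow> (\<exists>d. c # u @ [d] \<in> lang Z)"
proof
  assume "c # u \<in> lang Z"
  then obtain z i where z: "z \<in> Z" "occurs_at (c # u) z i" unfolding lang_def by blast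
  have "occurs_at ((c # u) @ [z (i + int (length (c # u)))]) z i"
    unfolding occurs_at_append using z(2) by (simp add: occurs_at_def)
  then have "occurs_at (c # u @ [z (i + int (length (c # u)))]) z i" by simp
  then show "\<exists>d. c # u @ [d] \<in> lang Z" using z(1) unfolding lang_def by blast
next
  assume "\<exists>d. c # u @ [d] \<in> lang Z"
  then obtain d z i where z: "z \<in> Z" "occurs_at (c # u @ [d]) z i" unfolding lang_def by blast
  then have z2: "occurs_at ((c # u) @ [d]) z i" by simp
  have "occurs_at (c # u) z i" using z2 unfolding occurs_at_append by blast
  then show "c # u \<in> lang Z" using z(1) unfolding lang_def by blast
qed

lemma snoc_in_lang_iff: "u @ [d] \<in> lang Z \<longleftrightarrow> (\<exists>c. c # u @ [d] \<in> lang Z)"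
proof
  assume "u @ [d] \<in> lang Z"
  then obtain z i where z: "z \<in> Z" "occurs_at (u @ [d]) z i" unfolding lang_def by blast
  have "occurs_at (z (i - 1) # u @ [d]) z (i - 1)"
    unfolding occurs_at_Cons using z(2) by simp
  then show "\<exists>c. c # u @ [d] \<in> lang Z" using z(1) unfolding lang_def by blast
next
  assume "\<exists>c. c # u @ [d] \<in> lang Z"
  then obtain c z i where z: "z \<in> Z" "occurs_at (c # u @ [d]) z i" unfolding lang_def by blast
  then have "occurs_at (u @ [d]) z (i + 1)" unfolding occurs_at_Cons by blast
  then show "u @ [d] \<in> lang Z" using z(1) unfolding lang_def by blast
qed

lemma in_lang_if_extension: "c # u @ [d] \<in> lang Z \<Longrightarrow> u \<in> lang Z"
proof -
  assume "c # u @ [d] \<in> lang Z"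
  then obtain z i where z: "z \<in> Z" "occurs_at (c # u @ [d]) z i" unfolding lang_def by blast
  then have "occurs_at (u @ [d]) z (i + 1)" unfolding occurs_at_Cons by blast
  then have "occurs_at u z (i + 1)" unfolding occurs_at_append by blast
  then show "u \<in> lang Z" using z(1) unfolding lang_def by blast
qed

lemma left_ext_eq_fst_ext: "left_ext Z u = fst ` ext Z u"
proof (intro set_eqI iffI)
  fix c assume "c \<in> left_ext Z u"
  then have "c # u \<in> lang Z" unfolding left_ext_def by simp
  then obtain d where "c # u @ [d] \<in> lang Z" using Cons_in_lang_iff[of c u Z] by blast
  then have "(c,d) \<in> ext Z u" unfolding ext_def by simp
  then show "c \<in> fst ` ext Z u" by (metis fst_conv image_eqI)
next
  fix c assume "c \<in> fst ` ext Z u"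
  then obtain d where "(c,d) \<in> ext Z u" by auto
  then have "c # u @ [d] \<in> lang Z" unfolding ext_def by simp
  then have "c # u \<in> lang Z" using Cons_in_lang_iff[of c u Z] by blast
  then show "c \<in> left_ext Z u" unfolding left_ext_def by simp
qed

lemma right_ext_eq_snd_ext: "right_ext Z u = snd ` ext Z u"
proof (intro set_eqI iffI)
  fix d assume "d \<in> right_ext Z u"
  then have "u @ [d] \<in> lang Z" unfolding right_ext_def by simp
  then obtain c where "c # u @ [d] \<in> lang Z" using snoc_in_lang_iff[of u d Z] by blast
  then have "(c,d) \<in> ext Z u" unfolding ext_def by simp
  then show "d \<in> snd ` ext Z u" by (metis snd_conv image_eqI)
next
  fix d assume "d \<in> snd ` ext Z u"
  then obtain c where "(c,d) \<in> ext Z u" by auto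
  then have "c # u @ [d] \<in> lang Z" unfolding ext_def by simp
  then have "u @ [d] \<in> lang Z" using snoc_in_lang_iff[of u d Z] by blast
  then show "d \<in> right_ext Z u" unfolding right_ext_def by simp
qed

section \<open>Strongly left proper injective morphisms\<close>

lemma inj_if_inj_morph:
  assumes "inj (morph \<sigma>)"
  shows "inj \<sigma>"
proof (rule injI)
  fix a b assume "\<sigma> a = \<sigma> b"
  then have "morph \<sigma> [a] = morph \<sigma> [b]" unfolding morph_def by simp
  then show "a = b" using assms by (simp add: inj_eq)
qed

locale slp_morphism =
  fixes \<sigma> :: "'a \<Rightarrow> 'b list" and l :: 'b
  assumes strongly_left_proper: "strongly_left_proper \<sigma> l" and inj: "inj \<sigma>"
begin

lemma image_eq_Cons: "\<sigma> a = l # tl (\<sigma> a)" and marker_notin_tl: "l \<notin> set (tl (\<sigma> a))"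
proof -
  have a: "\<sigma> a \<noteq> []" "hd (\<sigma> a) = l" "count_list (\<sigma> a) l = 1"
    using strongly_left_proper unfolding strongly_left_proper_def by auto
  then show eq: "\<sigma> a = l # tl (\<sigma> a)" by (cases "\<sigma> a") auto
  have "count_list (l # tl (\<sigma> a)) l = 1" using a(3) eq by metis
  then show "l \<notin> set (tl (\<sigma> a))" by (simp add: count_list_0_iff)
qed

lemma image_neq_Nil: "\<sigma> a \<noteq> []"
  using image_eq_Cons[of a] by (metis list.distinct(1))

lemma marker_in_image: "l \<in> set (\<sigma> a)"
  using image_eq_Cons[of a] by (metis list.set_intros(1))

lemma nth_image_eq_marker:
  assumes "\<sigma> a ! k = l" "k < length (\<sigma> a)"
  shows "k = 0"
proof (rule ccontr)
  assume "k \<noteq> 0"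
  then have "tl (\<sigma> a) ! (k - 1) = l" "k - 1 < length (tl (\<sigma> a))"
    using assms by (auto simp: nth_tl)
  then show False using marker_notin_tl nth_mem by metis
qed

lemma marker_notin_proper_suffix:
  assumes "suffix s (\<sigma> a)" "s \<noteq> \<sigma> a"
  shows "l \<notin> set s"
proof -
  have "suffix s (tl (\<sigma> a))" using assms image_eq_Cons[of a] suffix_Cons by metis
  then show ?thesis using marker_notin_tl[of a] set_mono_suffix by blast
qed

lemma image_neq_if_marker_notin: "l \<notin> set s \<Longrightarrow> s \<noteq> \<sigma> a"
  using marker_in_image by auto

lemma prefix_image_marker_only_hd:
  assumes "prefix p (\<sigma> b)" "p \<noteq> []"
  shows "hd p = l \<and> l \<notin> set (tl p)"
proof -
  obtain p' where p: "p = l # p'" "prefix p' (tl (\<sigma> b))"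
    using assms image_eq_Cons[of b] by (metis Cons_prefix_Cons list.exhaust)
  then show ?thesis using marker_notin_tl[of b] set_mono_prefix by fastforce
qed

lemma suffix_image_inj: "suffix (\<sigma> a) (\<sigma> a') \<Longrightarrow> a = a'"
proof -
  assume "suffix (\<sigma> a) (\<sigma> a')"
  then obtain t where t: "\<sigma> a' = t @ \<sigma> a" unfolding suffix_def by blast
  show "a = a'"
  proof (cases "t = []")
    case True
    then show ?thesis using t inj by (simp add: inj_eq)
  next
    case False
    then have "tl (\<sigma> a') = tl t @ \<sigma> a" using t by simp
    then show ?thesis using marker_in_image[of a] marker_notin_tl[of a'] by simp
  qed
qed

lemma prefix_image_marker_inj: "prefix (\<sigma> b @ [l]) (\<sigma> b' @ [l]) \<Longrightarrow> b = b'"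
proof -
  assume "prefix (\<sigma> b @ [l]) (\<sigma> b' @ [l])"
  then obtain t where t: "\<sigma> b' @ [l] = \<sigma> b @ [l] @ t" unfolding prefix_def by auto
  show "b = b'"
  proof (cases "t = []")
    case True
    then show ?thesis using t inj by (simp add: inj_eq)
  next
    case False
    then obtain t' x where "t = t' @ [x]" by (metis append_butlast_last_id)
    then have "\<sigma> b' = \<sigma> b @ l # t'" using t by simp
    then have "tl (\<sigma> b') = tl (\<sigma> b) @ l # t'" using image_neq_Nil[of b] by simp
    then show ?thesis using marker_notin_tl[of b'] by simp
  qed
qed

lemma prefix_image_if_prefix_image_marker:
  assumes "prefix p (\<sigma> x @ [l])" "prefix p (\<sigma> y @ [l])" "x \<noteq> y"
  shows "prefix p (\<sigma> x)"
proof -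
  have "p \<noteq> \<sigma> x @ [l]" using assms prefix_image_marker_inj by blast
  then show ?thesis using assms(1) prefix_snoc[of p "\<sigma> x" l] by blast
qed

lemma lcs_image_neq: "a1 \<noteq> a2 \<Longrightarrow> lcs (\<sigma> a1) (\<sigma> a2) \<noteq> \<sigma> a1"
  using suffix_lcs2[of "\<sigma> a1" "\<sigma> a2"] suffix_image_inj by force

lemma lcp_image_neq_Nil: "lcp (\<sigma> b1) (\<sigma> b2) \<noteq> []"
  by (subst image_eq_Cons, subst image_eq_Cons) simp

text \<open>The shape of s and p when s is a proper suffix and p a nonempty prefix of images of
  letters: the marker l, which starts every image, occurs in s \<sigma>(v) p exactly at the block
  boundaries, so occurrences of s \<sigma>(v) p parse uniquely.\<close>

definition parsable :: "'b list \<Rightarrow> 'b list \<Rightarrow> bool" where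
  "parsable s p \<longleftrightarrow> l \<notin> set s \<and> p \<noteq> [] \<and> hd p = l \<and> l \<notin> set (tl p)"

text \<open>For G the extension set of v, restrict_ext G s p is the edge set of the paper's
  graph E_{X,s,p}(v), and image_ext G s p is the extension set of s \<sigma>(v) p in the image
  shift (ext_image_shift).\<close>

definition restrict_ext :: "('a \<times> 'a) set \<Rightarrow> 'b list \<Rightarrow> 'b list \<Rightarrow> ('a \<times> 'a) set" where
  "restrict_ext G s p = {(a, b) \<in> G. suffix s (\<sigma> a) \<and> prefix p (\<sigma> b @ [l])}"

definition image_ext :: "('a \<times> 'a) set \<Rightarrow> 'b list \<Rightarrow> 'b list \<Rightarrow> ('b \<times> 'b) set" where
  "image_ext G s p =
     {(c, d). \<exists>(a, b)\<in>G. suffix (c # s) (\<sigma> a) \<and> prefix (p @ [d]) (\<sigma> b @ [l])}"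

definition admissible :: "('a \<times> 'a) set \<Rightarrow> 'b list \<Rightarrow> 'b list \<Rightarrow> bool" where
  "admissible G s p \<longleftrightarrow> (\<exists>(a, b)\<in>G. suffix s (\<sigma> a) \<and> s \<noteq> \<sigma> a \<and> prefix p (\<sigma> b) \<and> p \<noteq> [])"

text \<open>Meaningful only when s is a proper suffix of \<sigma>(a), resp. p a proper prefix of
  \<sigma>(b) l.\<close>

definition letter_before :: "'b list \<Rightarrow> 'a \<Rightarrow> 'b" where
  "letter_before s a = \<sigma> a ! (length (\<sigma> a) - Suc (length s))"

definition letter_after :: "'b list \<Rightarrow> 'a \<Rightarrow> 'b" where
  "letter_after p b = (\<sigma> b @ [l]) ! length p"

lemma parsable_prefix_marker_less:
  assumes "parsable s p" "prefix p (\<sigma> b @ [l])"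
  shows "length p < length (\<sigma> b @ [l])"
proof -
  have "p \<noteq> \<sigma> b @ [l]"
  proof
    assume "p = \<sigma> b @ [l]"
    then have "tl p = tl (\<sigma> b) @ [l]" using image_neq_Nil[of b] by simp
    then show False using assms(1) unfolding parsable_def by simp
  qed
  then show ?thesis using assms(2) prefix_length_less strict_prefix_def by metis
qed

lemma parsable_prefix_image:
  "parsable s p \<Longrightarrow> prefix p (\<sigma> b @ [l]) \<Longrightarrow> prefix p (\<sigma> b)"
  using parsable_prefix_marker_less prefix_snoc by (metis less_irrefl)

lemma suffix_Cons_iff_letter_before:
  assumes "parsable s p"
  shows "suffix (c # s) (\<sigma> a) \<longleftrightarrow> suffix s (\<sigma> a) \<and> letter_before s a = c"
proof (cases "suffix s (\<sigma> a)")
  case True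
  then obtain z where z: "\<sigma> a = z @ s" unfolding suffix_def by blast
  have "s \<noteq> \<sigma> a" using assms image_neq_if_marker_notin unfolding parsable_def by blast
  then obtain z' x where "z = z' @ [x]" using z by (cases z rule: rev_cases) auto
  then show ?thesis
    unfolding letter_before_def z by (simp add: suffix_to_prefix nth_append eq_commute[of c x])
next
  case False
  then show ?thesis using suffix_ConsD[of c s "\<sigma> a"] by blast
qed

lemma prefix_snoc_iff_letter_after:
  assumes "parsable s p"
  shows "prefix (p @ [d]) (\<sigma> b @ [l]) \<longleftrightarrow> prefix p (\<sigma> b @ [l]) \<and> letter_after p b = d"
proof (cases "prefix p (\<sigma> b @ [l])")
  case True
  then obtain r where r: "\<sigma> b @ [l] = p @ r" unfolding prefix_def by blast
  have "length r > 0"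
    using parsable_prefix_marker_less[OF assms True] arg_cong[OF r, of length] by simp
  then obtain x r' where "r = x # r'" by (cases r) auto
  then show ?thesis unfolding letter_after_def r by (simp add: eq_commute[of d x])
next
  case False
  then show ?thesis using append_prefixD[of p "[d]" "\<sigma> b @ [l]"] by blast
qed

lemma admissible_iff: "admissible G s p \<longleftrightarrow> parsable s p \<and> restrict_ext G s p \<noteq> {}"
proof
  assume "admissible G s p"
  then obtain a b where ab: "(a, b) \<in> G" "suffix s (\<sigma> a)" "s \<noteq> \<sigma> a" "prefix p (\<sigma> b)" "p \<noteq> []"
    unfolding admissible_def by blast
  then have "parsable s p"
    using marker_notin_proper_suffix prefix_image_marker_only_hd unfolding parsable_def by blast
  moreover have "(a, b) \<in> restrict_ext G s p"
    using ab unfolding restrict_ext_def by (simp add: prefix_prefix)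
  ultimately show "parsable s p \<and> restrict_ext G s p \<noteq> {}" by blast
next
  assume asm: "parsable s p \<and> restrict_ext G s p \<noteq> {}"
  then obtain a b where "(a, b) \<in> G" "suffix s (\<sigma> a)" "prefix p (\<sigma> b @ [l])"
    unfolding restrict_ext_def by blast
  then show "admissible G s p"
    using asm parsable_prefix_image image_neq_if_marker_notin
    unfolding admissible_def parsable_def by blast
qed

lemma restrict_ext_eq_Int:
  "restrict_ext G s p = G \<inter> {a. suffix s (\<sigma> a)} \<times> {b. prefix p (\<sigma> b @ [l])}"
  "restrict_ext G s [] = G \<inter> {a. suffix s (\<sigma> a)} \<times> UNIV"
  "restrict_ext G [] p = G \<inter> UNIV \<times> {b. prefix p (\<sigma> b @ [l])}"
  unfolding restrict_ext_def by auto

lemma restrict_ext_subset: "restrict_ext G s p \<subseteq> G"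
  unfolding restrict_ext_def by auto

lemma restrict_ext_Cons:
  assumes "parsable s p"
  shows "restrict_ext G (c # s) p = {(a, b) \<in> restrict_ext G s p. letter_before s a = c}"
  unfolding restrict_ext_def suffix_Cons_iff_letter_before[OF assms] by blast

lemma restrict_ext_snoc:
  assumes "parsable s p"
  shows "restrict_ext G s (p @ [d]) = {(a, b) \<in> restrict_ext G s p. letter_after p b = d}"
  unfolding restrict_ext_def prefix_snoc_iff_letter_after[OF assms] by blast

lemma image_ext_eq_image_restrict_ext:
  assumes "parsable s p"
  shows "image_ext G s p = map_prod (letter_before s) (letter_after p) ` restrict_ext G s p"
proof -
  have "image_ext G s p =
      {(c, d). \<exists>(a, b)\<in>restrict_ext G s p. letter_before s a = c \<and> letter_after p b = d}"
    unfolding image_ext_def restrict_ext_def suffix_Cons_iff_letter_before[OF assms]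
      prefix_snoc_iff_letter_after[OF assms] by blast
  then show ?thesis by force
qed

lemma admissible_Cons:
  assumes "parsable s p" "(a1, b1) \<in> restrict_ext G s p" "(a2, b2) \<in> restrict_ext G s p"
    and "a1 \<noteq> a2" "letter_before s a1 = letter_before s a2"
  shows "admissible G (letter_before s a1 # s) p"
proof -
  let ?c = "letter_before s a1"
  have "(a1, b1) \<in> restrict_ext G (?c # s) p" "(a2, b2) \<in> restrict_ext G (?c # s) p"
    unfolding restrict_ext_Cons[OF assms(1)] using assms(2,3,5) by simp_all
  then have ab: "(a1, b1) \<in> G" "suffix (?c # s) (\<sigma> a1)" "suffix (?c # s) (\<sigma> a2)"
    "prefix p (\<sigma> b1 @ [l])"
    unfolding restrict_ext_def by auto
  have "?c # s \<noteq> \<sigma> a1"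
  proof
    assume eq: "?c # s = \<sigma> a1"
    have "suffix (\<sigma> a1) (\<sigma> a2)" using ab(3) unfolding eq .
    then show False using suffix_image_inj assms(4) by blast
  qed
  moreover have "prefix p (\<sigma> b1)" "p \<noteq> []"
    using parsable_prefix_image[OF assms(1) ab(4)] assms(1) unfolding parsable_def by auto
  ultimately show ?thesis using ab(1,2) unfolding admissible_def by blast
qed

lemma admissible_snoc:
  assumes "parsable s p" "(a1, b1) \<in> restrict_ext G s p" "(a2, b2) \<in> restrict_ext G s p"
    and "b1 \<noteq> b2" "letter_after p b1 = letter_after p b2"
  shows "admissible G s (p @ [letter_after p b1])"
proof -
  let ?p = "p @ [letter_after p b1]"
  have "(a1, b1) \<in> restrict_ext G s ?p" "(a2, b2) \<in> restrict_ext G s ?p"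
    unfolding restrict_ext_snoc[OF assms(1)] using assms(2,3,5) by simp_all
  then have ab: "(a1, b1) \<in> G" "suffix s (\<sigma> a1)" "prefix ?p (\<sigma> b1 @ [l])"
    "prefix ?p (\<sigma> b2 @ [l])"
    unfolding restrict_ext_def by (simp_all del: prefix_snoc)
  have "?p \<noteq> \<sigma> b1 @ [l]"
  proof
    assume eq: "?p = \<sigma> b1 @ [l]"
    have "prefix (\<sigma> b1 @ [l]) (\<sigma> b2 @ [l])" using ab(4) unfolding eq .
    then show False using prefix_image_marker_inj assms(4) by blast
  qed
  then have "prefix ?p (\<sigma> b1)" using ab(3) prefix_snoc[of ?p "\<sigma> b1" l] by blast
  moreover have "s \<noteq> \<sigma> a1" using assms(1) image_neq_if_marker_notin unfolding parsable_def by blast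
  ultimately show ?thesis using ab(1,2) unfolding admissible_def by blast
qed

end

section \<open>Extension graphs of extended images\<close>

context slp_morphism
begin

lemma bip_connected_restrict_Cons:
  assumes "parsable s p"
    and longer: "\<And>s' p'. admissible G s' p' \<Longrightarrow> length s + length p < length s' + length p' \<Longrightarrow>
      bip_connected (restrict_ext G s' p')"
  shows "bip_connected (restrict_ext G (c # s) p)"
proof (cases "\<exists>a1 b1 a2 b2. (a1, b1) \<in> restrict_ext G (c # s) p \<and>
    (a2, b2) \<in> restrict_ext G (c # s) p \<and> a1 \<noteq> a2")
  case True
  then obtain a1 b1 a2 b2 where "(a1, b1) \<in> restrict_ext G (c # s) p"
    "(a2, b2) \<in> restrict_ext G (c # s) p" "a1 \<noteq> a2"
    by blast
  then have "admissible G (letter_before s a1 # s) p" "letter_before s a1 = c"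
    using admissible_Cons[OF assms(1)] unfolding restrict_ext_Cons[OF assms(1)] by auto
  then show ?thesis using longer by simp
next
  case False
  then show ?thesis by (intro bip_connected_single_Inl) blast
qed

lemma bip_connected_restrict_snoc:
  assumes "parsable s p"
    and longer: "\<And>s' p'. admissible G s' p' \<Longrightarrow> length s + length p < length s' + length p' \<Longrightarrow>
      bip_connected (restrict_ext G s' p')"
  shows "bip_connected (restrict_ext G s (p @ [d]))"
proof (cases "\<exists>a1 b1 a2 b2. (a1, b1) \<in> restrict_ext G s (p @ [d]) \<and>
    (a2, b2) \<in> restrict_ext G s (p @ [d]) \<and> b1 \<noteq> b2")
  case True
  then obtain a1 b1 a2 b2 where "(a1, b1) \<in> restrict_ext G s (p @ [d])"
    "(a2, b2) \<in> restrict_ext G s (p @ [d])" "b1 \<noteq> b2"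
    by blast
  then have "admissible G s (p @ [letter_after p b1])" "letter_after p b1 = d"
    using admissible_snoc[OF assms(1)] unfolding restrict_ext_snoc[OF assms(1)] by auto
  then show ?thesis using longer by simp
next
  case False
  then show ?thesis by (intro bip_connected_single_Inr) blast
qed

abbreviation boundary_letters :: "'b list \<Rightarrow> 'b list \<Rightarrow> 'a + 'a \<Rightarrow> 'b + 'b" where
  "boundary_letters s p \<equiv> map_sum (letter_before s) (letter_after p)"

lemma rtrancl_fibre_step_restrict:
  assumes "parsable s p"
    and Cons: "\<And>c. bip_connected (restrict_ext G (c # s) p)"
    and snoc: "\<And>d. bip_connected (restrict_ext G s (p @ [d]))"
    and uw: "u \<in> bip_vertices (restrict_ext G s p)" "w \<in> bip_vertices (restrict_ext G s p)"
      "boundary_letters s p u = boundary_letters s p w"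
  shows "(u, w) \<in> (fibre_step (bip_vertices (restrict_ext G s p)) (bip_adj (restrict_ext G s p))
      (boundary_letters s p))\<^sup>*"
proof (cases u)
  case (Inl a1)
  then obtain a2 where w: "w = Inl a2" and c: "letter_before s a2 = letter_before s a1"
    using uw(3) by (cases w) auto
  let ?E = "restrict_ext G (letter_before s a1 # s) p"
  have E: "?E = {(a, b) \<in> restrict_ext G s p. letter_before s a = letter_before s a1}"
    by (rule restrict_ext_Cons[OF assms(1)])
  have "\<exists>b. (a1, b) \<in> restrict_ext G s p" "\<exists>b. (a2, b) \<in> restrict_ext G s p"
    using uw(1,2) unfolding Inl w Inl_in_bip_vertices by auto
  then have "Inl a1 \<in> bip_vertices ?E" "Inl a2 \<in> bip_vertices ?E"
    using c unfolding E Inl_in_bip_vertices by auto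
  then show ?thesis
    unfolding Inl w using E by (intro rtrancl_fibre_step_Inl[OF Cons]) auto
next
  case (Inr b1)
  then obtain b2 where w: "w = Inr b2" and d: "letter_after p b2 = letter_after p b1"
    using uw(3) by (cases w) auto
  let ?E = "restrict_ext G s (p @ [letter_after p b1])"
  have E: "?E = {(a, b) \<in> restrict_ext G s p. letter_after p b = letter_after p b1}"
    by (rule restrict_ext_snoc[OF assms(1)])
  have "\<exists>a. (a, b1) \<in> restrict_ext G s p" "\<exists>a. (a, b2) \<in> restrict_ext G s p"
    using uw(1,2) unfolding Inr w Inr_in_bip_vertices by auto
  then have "Inr b1 \<in> bip_vertices ?E" "Inr b2 \<in> bip_vertices ?E"
    using d unfolding E Inr_in_bip_vertices by auto
  then show ?thesis
    unfolding Inr w using E by (intro rtrancl_fibre_step_Inr[OF snoc]) auto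
qed

lemma image_ext_as_image:
  assumes "parsable s p"
  shows "bip_vertices (image_ext G s p) = boundary_letters s p ` bip_vertices (restrict_ext G s p)"
    and "bip_adj (image_ext G s p) =
      image_adj (bip_vertices (restrict_ext G s p)) (bip_adj (restrict_ext G s p))
        (boundary_letters s p)"
  unfolding image_ext_eq_image_restrict_ext[OF assms] bip_vertices_image_map_prod image_adj_bip_adj
  by simp_all

lemma bip_edge_tree_image_ext:
  assumes tree: "bip_edge_tree G" and fin: "finite G"
    and adm: "admissible G s p"
    and conn: "\<And>s' p'. admissible G s' p' \<Longrightarrow> bip_connected (restrict_ext G s' p')"
  shows "bip_edge_tree (image_ext G s p)"
proof -
  let ?H = "restrict_ext G s p"
  have par: "parsable s p" and ne: "?H \<noteq> {}" using adm by (simp_all add: admissible_iff)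
  have longer: "\<And>s' p'. admissible G s' p' \<Longrightarrow>
      length s + length p < length s' + length p' \<Longrightarrow> bip_connected (restrict_ext G s' p')"
    using conn by blast
  have "bip_edge_tree ?H"
    using bip_edge_tree_subset[OF tree restrict_ext_subset ne conn[OF adm]] .
  moreover have "finite (bip_vertices ?H)"
    using finite_subset[OF restrict_ext_subset fin] by (rule finite_bip_vertices)
  moreover have "boundary_letters s p u \<noteq> boundary_letters s p w" if "bip_adj ?H u w" for u w
    using that by (cases u; cases w) auto
  moreover have "(u, w) \<in> (fibre_step (bip_vertices ?H) (bip_adj ?H) (boundary_letters s p))\<^sup>*"
    if "u \<in> bip_vertices ?H" "w \<in> bip_vertices ?H"
      "boundary_letters s p u = boundary_letters s p w" for u w
    by (rule rtrancl_fibre_step_restrict[OF par bip_connected_restrict_Cons[OF par longer]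
          bip_connected_restrict_snoc[OF par longer] that])
  ultimately show ?thesis
    unfolding image_ext_as_image[OF par] using bip_adj_sym by (intro ug_tree_quotient) auto
qed

text \<open>If s \<sigma>(v) p is bispecial in the image, its extension graph is a tree, onto which the
  restriction maps with connected fibres; otherwise the restriction coincides with the
  restriction to a longer cut.\<close>

lemma bip_connected_restrict_step:
  assumes fin: "finite G" and adm: "admissible G s p"
    and longer: "\<And>s' p'. admissible G s' p' \<Longrightarrow> length s + length p < length s' + length p' \<Longrightarrow>
      bip_connected (restrict_ext G s' p')"
    and tree: "2 \<le> card (fst ` image_ext G s p) \<Longrightarrow> 2 \<le> card (snd ` image_ext G s p) \<Longrightarrow>
      bip_edge_tree (image_ext G s p)"
  shows "bip_connected (restrict_ext G s p)"
proof -
  let ?H = "restrict_ext G s p"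
  have par: "parsable s p" using adm by (simp add: admissible_iff)
  have finH: "finite ?H" using finite_subset[OF restrict_ext_subset fin] .
  have fst_image: "fst ` image_ext G s p = letter_before s ` fst ` ?H"
    and snd_image: "snd ` image_ext G s p = letter_after p ` snd ` ?H"
    unfolding image_ext_eq_image_restrict_ext[OF par] fst_image_map_prod snd_image_map_prod
    by simp_all
  consider "2 \<le> card (fst ` image_ext G s p)" "2 \<le> card (snd ` image_ext G s p)"
    | "card (fst ` image_ext G s p) \<le> Suc 0" | "card (snd ` image_ext G s p) \<le> Suc 0"
    by linarith
  then show ?thesis
  proof cases
    case 1
    then have "ug_connected (boundary_letters s p ` bip_vertices ?H)
        (image_adj (bip_vertices ?H) (bip_adj ?H) (boundary_letters s p))"
      using tree unfolding image_ext_as_image[OF par] ug_tree_def by blast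
    moreover have "(u, w) \<in> (ug_edges (bip_vertices ?H) (bip_adj ?H))\<^sup>*"
      if "u \<in> bip_vertices ?H" "w \<in> bip_vertices ?H"
      "boundary_letters s p u = boundary_letters s p w" for u w
      by (rule rtrancl_fibre_step_imp_edges, rule rtrancl_fibre_step_restrict[OF par
            bip_connected_restrict_Cons[OF par longer] bip_connected_restrict_snoc[OF par longer] that])
    ultimately show ?thesis by (rule ug_connected_lift)
  next
    case 2
    then have "letter_before s a = letter_before s a'" if "a \<in> fst ` ?H" "a' \<in> fst ` ?H" for a a'
      using that finH unfolding fst_image by (auto simp: card_le_Suc0_iff_eq)
    then obtain c where "\<forall>a\<in>fst ` ?H. letter_before s a = c" by blast
    then have "?H = restrict_ext G (c # s) p"
      unfolding restrict_ext_Cons[OF par] by force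
    then show ?thesis using bip_connected_restrict_Cons[OF par longer] by simp
  next
    case 3
    then have "letter_after p b = letter_after p b'" if "b \<in> snd ` ?H" "b' \<in> snd ` ?H" for b b'
      using that finH unfolding snd_image by (auto simp: card_le_Suc0_iff_eq)
    then obtain d where "\<forall>b\<in>snd ` ?H. letter_after p b = d" by blast
    then have "?H = restrict_ext G s (p @ [d])"
      unfolding restrict_ext_snoc[OF par] by force
    then show ?thesis using bip_connected_restrict_snoc[OF par longer] by simp
  qed
qed

lemma admissible_length_less:
  assumes "finite G" "admissible G s p"
  shows "length s + length p < Max ((\<lambda>(a, b). length (\<sigma> a) + length (\<sigma> b)) ` G)"
proof -
  obtain a b where ab: "(a, b) \<in> G" "suffix s (\<sigma> a)" "s \<noteq> \<sigma> a" "prefix p (\<sigma> b)"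
    using assms(2) unfolding admissible_def by blast
  have "length s < length (\<sigma> a)" using ab(2,3) unfolding suffix_def by auto
  then have "length s + length p < length (\<sigma> a) + length (\<sigma> b)"
    using prefix_length_le[OF ab(4)] by linarith
  also have "\<dots> \<le> Max ((\<lambda>(a, b). length (\<sigma> a) + length (\<sigma> b)) ` G)"
    using assms(1) ab(1) by (intro Max_ge) force+
  finally show ?thesis .
qed

lemma bip_connected_restrict_if_image_trees:
  assumes fin: "finite G"
    and trees: "\<And>s p. admissible G s p \<Longrightarrow> 2 \<le> card (fst ` image_ext G s p) \<Longrightarrow>
      2 \<le> card (snd ` image_ext G s p) \<Longrightarrow> bip_edge_tree (image_ext G s p)"
  shows "admissible G s p \<Longrightarrow> bip_connected (restrict_ext G s p)"
proof (induction "Max ((\<lambda>(a, b). length (\<sigma> a) + length (\<sigma> b)) ` G) - (length s + length p)"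
    arbitrary: s p rule: less_induct)
  case less
  show ?case
  proof (rule bip_connected_restrict_step[OF fin less.prems _ trees[OF less.prems]])
    fix s' p' assume s'p': "admissible G s' p'" "length s + length p < length s' + length p'"
    let ?K = "Max ((\<lambda>(a, b). length (\<sigma> a) + length (\<sigma> b)) ` G)"
    have "?K - (length s' + length p') < ?K - (length s + length p)"
      using s'p'(2) admissible_length_less[OF fin s'p'(1)] by linarith
    then show "bip_connected (restrict_ext G s' p')" using less.hyps s'p'(1) by blast
  qed
qed

end

section \<open>The language of the image shift\<close>

context slp_morphism
begin

lemma image_seq_block_start:
  assumes "is_image_seq \<sigma> x y"
  shows "y (img_pos \<sigma> x j) = l"
proof -
  have "y (img_pos \<sigma> x j + int 0) = \<sigma> (x j) ! 0"
    using assms image_neq_Nil[of "x j"] unfolding is_image_seq_def by blast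
  then show ?thesis by (subst (asm) image_eq_Cons) simp
qed

lemma image_seq_marker_at_block_start:
  assumes "is_image_seq \<sigma> x y" "y n = l"
  obtains j where "n = img_pos \<sigma> x j"
proof -
  obtain j where j: "img_pos \<sigma> x j \<le> n" "n < img_pos \<sigma> x (j + 1)"
    using img_pos_block_ex[of \<sigma>, OF image_neq_Nil] by blast
  define k where "k = nat (n - img_pos \<sigma> x j)"
  have n: "n = img_pos \<sigma> x j + int k" unfolding k_def using j by simp
  have k: "k < length (\<sigma> (x j))" using j(2) n img_pos_succ[of \<sigma> x j] by simp
  have "\<sigma> (x j) ! k = l" using assms k unfolding is_image_seq_def n by metis
  then have "k = 0" using nth_image_eq_marker k by blast
  then show ?thesis using n that by simp
qed

lemma image_seq_block_eq:
  assumes im: "is_image_seq \<sigma> x y" and occ: "occurs_at (\<sigma> a) y (img_pos \<sigma> x j)"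
    and next_marker: "y (img_pos \<sigma> x j + int (length (\<sigma> a))) = l"
  shows "x j = a"
proof -
  let ?P = "img_pos \<sigma> x j" and ?m = "length (\<sigma> (x j))"
  have blk: "y (?P + int t) = \<sigma> (x j) ! t" if "t < ?m" for t
    using im that unfolding is_image_seq_def by blast
  have occ': "y (?P + int t) = \<sigma> a ! t" if "t < length (\<sigma> a)" for t
    using occ that unfolding occurs_at_def by blast
  have "y (?P + int ?m) = l"
    using image_seq_block_start[OF im, of "j + 1"] img_pos_succ[of \<sigma> x j] by simp
  moreover have "?m \<noteq> 0" "length (\<sigma> a) \<noteq> 0" using image_neq_Nil by simp_all
  ultimately have "\<not> ?m < length (\<sigma> a)" "\<not> length (\<sigma> a) < ?m"
    using blk occ' next_marker nth_image_eq_marker by metis+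
  then have "?m = length (\<sigma> a)" by simp
  then have "\<sigma> (x j) = \<sigma> a" using blk occ' by (intro nth_equalityI) auto
  then show ?thesis using inj by (simp add: inj_eq)
qed

lemma morph_append_marker:
  assumes "p \<noteq> []" "hd p = l"
  shows "morph \<sigma> w @ p \<noteq> [] \<and> hd (morph \<sigma> w @ p) = l"
proof (cases w)
  case (Cons a w')
  have "morph \<sigma> w @ p = l # (tl (\<sigma> a) @ morph \<sigma> w' @ p)"
    unfolding Cons morph_Cons by (subst image_eq_Cons) simp
  then show ?thesis by simp
qed (use assms in simp)

lemma image_seq_parse_morph:
  assumes im: "is_image_seq \<sigma> x y" and p: "p \<noteq> []" "hd p = l"
  shows "occurs_at (morph \<sigma> w @ p) y (img_pos \<sigma> x j) \<Longrightarrow>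
    (\<forall>t<length w. x (j + int t) = w ! t) \<and>
    img_pos \<sigma> x (j + int (length w)) = img_pos \<sigma> x j + int (length (morph \<sigma> w))"
proof (induction w arbitrary: j)
  case (Cons a w)
  let ?P = "img_pos \<sigma> x j"
  have occ: "occurs_at (\<sigma> a) y ?P" "occurs_at (morph \<sigma> w @ p) y (?P + int (length (\<sigma> a)))"
    using Cons.prems unfolding morph_Cons append_assoc occurs_at_append by auto
  have ne: "morph \<sigma> w @ p \<noteq> []" and hd: "hd (morph \<sigma> w @ p) = l"
    using morph_append_marker[OF p, of w] by auto
  have "y (?P + int (length (\<sigma> a)) + int 0) = (morph \<sigma> w @ p) ! 0"
    using occ(2) ne unfolding occurs_at_def by blast
  then have "y (?P + int (length (\<sigma> a))) = l"
    using ne hd by (simp add: hd_conv_nth)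
  then have xj: "x j = a" by (rule image_seq_block_eq[OF im occ(1)])
  then have succ: "img_pos \<sigma> x (j + 1) = ?P + int (length (\<sigma> a))"
    using img_pos_succ[of \<sigma> x j] by simp
  then have IH: "(\<forall>t<length w. x (j + 1 + int t) = w ! t) \<and>
      img_pos \<sigma> x (j + 1 + int (length w)) = img_pos \<sigma> x (j + 1) + int (length (morph \<sigma> w))"
    using Cons.IH occ(2) by simp
  have "x (j + int t) = (a # w) ! t" if t: "t < length (a # w)" for t
  proof (cases t)
    case (Suc t')
    then have "j + int t = j + 1 + int t'" by simp
    then show ?thesis using IH t Suc by (simp add: ac_simps)
  qed (use xj in simp)
  moreover have "img_pos \<sigma> x (j + int (length (a # w))) = ?P + int (length (morph \<sigma> (a # w)))"
  proof -
    have "j + int (length (a # w)) = j + 1 + int (length w)" by simp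
    then have "img_pos \<sigma> x (j + int (length (a # w))) = img_pos \<sigma> x (j + 1 + int (length w))"
      by (rule arg_cong)
    also have "\<dots> = ?P + int (length (\<sigma> a)) + int (length (morph \<sigma> w))" using IH succ by simp
    finally show ?thesis by (simp add: morph_Cons)
  qed
  ultimately show ?case by blast
qed simp

lemma suffix_image_before_block:
  assumes im: "is_image_seq \<sigma> x y" and occ: "occurs_at (c # s) y q"
    and pos: "q + int (length (c # s)) = img_pos \<sigma> x j" and s: "l \<notin> set s"
  shows "suffix (c # s) (\<sigma> (x (j - 1)))"
proof -
  let ?a = "x (j - 1)"
  let ?m = "length (\<sigma> ?a)"
  have succ: "img_pos \<sigma> x j = img_pos \<sigma> x (j - 1) + int ?m"
    using img_pos_succ[of \<sigma> x "j - 1"] by simp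
  have len: "length s < ?m"
  proof (rule ccontr)
    assume "\<not> length s < ?m"
    then have k: "length s + 1 - ?m < length (c # s)" "length s + 1 - ?m \<ge> 1"
      using image_neq_Nil[of ?a] by (auto simp: Suc_leI)
    have "q + int (length s + 1 - ?m) = img_pos \<sigma> x (j - 1)"
      using succ pos \<open>\<not> length s < ?m\<close> by simp
    then have "(c # s) ! (length s + 1 - ?m) = l"
      using occurs_at_nth[OF occ k(1)] image_seq_block_start[OF im] by simp
    then have "s ! (length s - ?m) = l" "length s - ?m < length s"
      using k image_neq_Nil[of ?a] by (auto simp: Suc_diff_le)
    then show False using s nth_mem by metis
  qed
  define k0 where "k0 = ?m - Suc (length s)"
  have "c # s = drop k0 (\<sigma> ?a)"
  proof (rule nth_equalityI)
    fix i assume i: "i < length (c # s)"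
    then have ik: "k0 + i < ?m" using len unfolding k0_def by simp
    then have "y (img_pos \<sigma> x (j - 1) + int (k0 + i)) = \<sigma> ?a ! (k0 + i)"
      using im unfolding is_image_seq_def by blast
    moreover have "img_pos \<sigma> x (j - 1) + int (k0 + i) = q + int i"
      using succ pos len i unfolding k0_def by simp
    ultimately have "y (q + int i) = \<sigma> ?a ! (k0 + i)" by metis
    then show "(c # s) ! i = drop k0 (\<sigma> ?a) ! i"
      using occurs_at_nth[OF occ i] ik by simp
  qed (use len in \<open>simp add: k0_def\<close>)
  then show ?thesis by (metis suffix_drop)
qed

lemma prefix_image_at_block:
  assumes im: "is_image_seq \<sigma> x y" and occ: "occurs_at (p @ [d]) y (img_pos \<sigma> x j)"
    and p: "l \<notin> set (tl p)"
  shows "prefix (p @ [d]) (\<sigma> (x j) @ [l])"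
proof -
  let ?m = "length (\<sigma> (x j))"
  have next_block: "y (img_pos \<sigma> x j + int ?m) = l"
    using image_seq_block_start[OF im, of "j + 1"] img_pos_succ[of \<sigma> x j] by simp
  have len: "length p \<le> ?m"
  proof (rule ccontr)
    assume "\<not> length p \<le> ?m"
    then have "p ! ?m = l" "?m \<ge> 1"
      using occurs_at_nth[OF occ, of ?m] next_block image_neq_Nil[of "x j"]
      by (auto simp: nth_append Suc_leI)
    moreover have "?m - 1 < length p - 1" using \<open>\<not> length p \<le> ?m\<close> \<open>?m \<ge> 1\<close> by linarith
    then have "?m - 1 < length (tl p)" by simp
    moreover have "Suc (?m - 1) = ?m" using \<open>?m \<ge> 1\<close> by simp
    ultimately have "tl p ! (?m - 1) = l" "?m - 1 < length (tl p)" by (simp_all add: nth_tl)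
    then show False using p nth_mem by metis
  qed
  have "p @ [d] = take (Suc (length p)) (\<sigma> (x j) @ [l])"
  proof (rule nth_equalityI)
    fix i assume i: "i < length (p @ [d])"
    have "y (img_pos \<sigma> x j + int i) = (p @ [d]) ! i" using occurs_at_nth[OF occ i] .
    moreover have "y (img_pos \<sigma> x j + int i) = (\<sigma> (x j) @ [l]) ! i"
    proof (cases "i < ?m")
      case True
      then show ?thesis using im unfolding is_image_seq_def by (simp add: nth_append)
    next
      case False
      then have "i = ?m" using i len by simp
      then show ?thesis using next_block by simp
    qed
    moreover have "take (Suc (length p)) (\<sigma> (x j) @ [l]) ! i = (\<sigma> (x j) @ [l]) ! i"
      using i by (intro nth_take) simp
    ultimately show "(p @ [d]) ! i = take (Suc (length p)) (\<sigma> (x j) @ [l]) ! i"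
      by metis
  qed (use len in simp)
  then show ?thesis by (metis take_is_prefix)
qed

lemma ext_of_occurrence:
  assumes "x \<in> X" "\<And>t. t < length v \<Longrightarrow> x (j + int t) = v ! t"
  shows "(x (j - 1), x (j + int (length v))) \<in> ext X v"
proof -
  have "occurs_at (x (j - 1) # v @ [x (j + int (length v))]) x (j - 1)"
    unfolding occurs_at_def
  proof (intro allI impI)
    fix k assume k: "k < length (x (j - 1) # v @ [x (j + int (length v))])"
    show "x (j - 1 + int k) = (x (j - 1) # v @ [x (j + int (length v))]) ! k"
    proof (cases k)
      case (Suc k')
      then have "j - 1 + int k = j + int k'" by simp
      then show ?thesis using assms(2)[of k'] k Suc by (cases "k' < length v") (auto simp: nth_append less_Suc_eq)
    qed simp
  qed
  then show ?thesis unfolding ext_def lang_def using assms(1) by blast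
qed

lemma ext_in_image_ext:
  assumes par: "parsable s p" and w: "c # (s @ morph \<sigma> v @ p) @ [d] \<in> lang (image_shift \<sigma> X)"
  shows "(c, d) \<in> image_ext (ext X v) s p"
proof -
  let ?M = "morph \<sigma> v"
  obtain x y q where x: "x \<in> X" and im: "is_image_seq \<sigma> x y"
    and occ: "occurs_at ((c # s) @ ?M @ p @ [d]) y q"
    using w by (auto elim: lang_image_shiftD)
  define P0 where "P0 = q + int (length (c # s))"
  have occ1: "occurs_at (c # s) y q" and occ2: "occurs_at (?M @ p @ [d]) y P0"
    using occ unfolding occurs_at_append P0_def by auto
  have pd: "p @ [d] \<noteq> []" "hd (p @ [d]) = l" using par unfolding parsable_def by auto
  then have "?M @ p @ [d] \<noteq> []" "hd (?M @ p @ [d]) = l"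
    using morph_append_marker by blast+
  then have "y P0 = l" using occurs_at_nth[OF occ2, of 0] by (simp add: hd_conv_nth)
  then obtain j where j: "P0 = img_pos \<sigma> x j" by (rule image_seq_marker_at_block_start[OF im])
  have v: "\<forall>t<length v. x (j + int t) = v ! t"
    and end_v: "img_pos \<sigma> x (j + int (length v)) = P0 + int (length ?M)"
    using image_seq_parse_morph[OF im pd, of v j] occ2 j by auto
  have "(x (j - 1), x (j + int (length v))) \<in> ext X v"
    using ext_of_occurrence[OF x] v by blast
  moreover have "suffix (c # s) (\<sigma> (x (j - 1)))"
    using suffix_image_before_block[OF im occ1] j par unfolding P0_def parsable_def by simp
  moreover have "prefix (p @ [d]) (\<sigma> (x (j + int (length v))) @ [l])"
    using prefix_image_at_block[OF im] occ2 end_v par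
    unfolding occurs_at_append parsable_def by simp
  ultimately show ?thesis unfolding image_ext_def by blast
qed

lemma image_ext_in_ext:
  assumes "(c, d) \<in> image_ext (ext X v) s p"
  shows "c # (s @ morph \<sigma> v @ p) @ [d] \<in> lang (image_shift \<sigma> X)"
proof -
  obtain a b where ab: "(a, b) \<in> ext X v" "suffix (c # s) (\<sigma> a)" "prefix (p @ [d]) (\<sigma> b @ [l])"
    using assms unfolding image_ext_def by blast
  obtain x i where x: "x \<in> X" "occurs_at (a # v @ [b]) x i"
    using ab(1) unfolding ext_def lang_def by blast
  define e where "e = x (i + int (length v + 2))"
  have blocks: "map (\<lambda>t. x (i + int t)) [0..<length v + 3] = (a # v @ [b]) @ [e]"
  proof (rule nth_equalityI)
    fix t assume "t < length (map (\<lambda>t. x (i + int t)) [0..<length v + 3])"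
    then consider "t < length v + 2" | "t = length v + 2" by fastforce
    then show "map (\<lambda>t. x (i + int t)) [0..<length v + 3] ! t = ((a # v @ [b]) @ [e]) ! t"
    proof cases
      case 1
      then show ?thesis using occurs_at_nth[OF x(2), of t] nth_append[of "a # v @ [b]" "[e]" t] by simp
    next
      case 2
      then show ?thesis unfolding e_def by (simp add: nth_append)
    qed
  qed simp
  obtain y where im: "is_image_seq \<sigma> x y" using ex_image_seq[of \<sigma>, OF image_neq_Nil] by blast
  have occ: "occurs_at (morph \<sigma> ((a # v @ [b]) @ [e])) y (img_pos \<sigma> x i)"
    using occurs_at_image_seq[OF im, of i "length v + 3"] unfolding blocks by blast
  obtain A where A: "\<sigma> a = A @ c # s" using ab(2) unfolding suffix_def by blast
  obtain B where B: "\<sigma> b @ [l] = (p @ [d]) @ B" using ab(3) unfolding prefix_def by blast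
  have "\<sigma> b @ \<sigma> e = (\<sigma> b @ [l]) @ tl (\<sigma> e)"
    by (subst (1) image_eq_Cons[of e]) simp
  then have "morph \<sigma> ((a # v @ [b]) @ [e]) = \<sigma> a @ morph \<sigma> v @ (\<sigma> b @ [l]) @ tl (\<sigma> e)"
    by (simp add: morph_def)
  also have "\<dots> = A @ (c # (s @ morph \<sigma> v @ p) @ [d]) @ B @ tl (\<sigma> e)"
    unfolding A B by simp
  finally have "occurs_at (A @ (c # (s @ morph \<sigma> v @ p) @ [d]) @ B @ tl (\<sigma> e)) y (img_pos \<sigma> x i)"
    using occ by simp
  then have "occurs_at (c # (s @ morph \<sigma> v @ p) @ [d]) y (img_pos \<sigma> x i + int (length A))"
    unfolding occurs_at_append by blast
  then show ?thesis by (rule lang_image_shiftI[OF image_neq_Nil x(1) im])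
qed

lemma ext_image_shift:
  assumes "parsable s p"
  shows "ext (image_shift \<sigma> X) (s @ morph \<sigma> v @ p) = image_ext (ext X v) s p"
  using ext_in_image_ext[OF assms] image_ext_in_ext unfolding ext_def by auto

end

section \<open>Dendric preservation in terms of the restricted extension graphs\<close>

context slp_morphism
begin

lemma dendric_image_shift_iff:
  assumes "parsable s p"
  shows "dendric (image_shift \<sigma> X) (s @ morph \<sigma> v @ p) \<longleftrightarrow>
    s @ morph \<sigma> v @ p \<in> lang (image_shift \<sigma> X) \<and> bip_edge_tree (image_ext (ext X v) s p)"
  unfolding dendric_def left_ext_eq_fst_ext right_ext_eq_snd_ext ext_image_shift[OF assms]
    bip_tree_iff_edge_tree ..

lemma bispecial_image_shift_iff:
  assumes "parsable s p"
  shows "bispecial (image_shift \<sigma> X) (s @ morph \<sigma> v @ p) \<longleftrightarrow>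
    s @ morph \<sigma> v @ p \<in> lang (image_shift \<sigma> X) \<and>
    2 \<le> card (fst ` image_ext (ext X v) s p) \<and> 2 \<le> card (snd ` image_ext (ext X v) s p)"
  unfolding bispecial_def left_ext_eq_fst_ext right_ext_eq_snd_ext ext_image_shift[OF assms] ..

lemma ext_image_iff:
  "ext_image \<sigma> X v u \<longleftrightarrow> u \<in> lang (image_shift \<sigma> X) \<and>
    (\<exists>s p. admissible (ext X v) s p \<and> u = s @ morph \<sigma> v @ p)"
  unfolding ext_image_def admissible_def by blast

lemma dendric_preserving_iff_image_trees:
  "dendric_preserving \<sigma> X v \<longleftrightarrow>
    (\<forall>s p. admissible (ext X v) s p \<longrightarrow> 2 \<le> card (fst ` image_ext (ext X v) s p) \<longrightarrow>
      2 \<le> card (snd ` image_ext (ext X v) s p) \<longrightarrow> bip_edge_tree (image_ext (ext X v) s p))"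
  (is "_ \<longleftrightarrow> (\<forall>s p. ?adm s p \<longrightarrow> ?two_left s p \<longrightarrow> ?two_right s p \<longrightarrow> ?tree s p)")
proof
  assume dp: "dendric_preserving \<sigma> X v"
  show "\<forall>s p. ?adm s p \<longrightarrow> ?two_left s p \<longrightarrow> ?two_right s p \<longrightarrow> ?tree s p"
  proof (intro allI impI)
    fix s p assume adm: "?adm s p" and two: "?two_left s p" "?two_right s p"
    have par: "parsable s p" using adm by (simp add: admissible_iff)
    have "image_ext (ext X v) s p \<noteq> {}" using two(1) by auto
    then obtain c d where "(c, d) \<in> image_ext (ext X v) s p" by auto
    then have lang: "s @ morph \<sigma> v @ p \<in> lang (image_shift \<sigma> X)"
      by (rule in_lang_if_extension[OF image_ext_in_ext])
    then have "ext_image \<sigma> X v (s @ morph \<sigma> v @ p)"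
      unfolding ext_image_iff using adm by blast
    moreover have "bispecial (image_shift \<sigma> X) (s @ morph \<sigma> v @ p)"
      unfolding bispecial_image_shift_iff[OF par] using lang two by blast
    ultimately have "dendric (image_shift \<sigma> X) (s @ morph \<sigma> v @ p)"
      using dp unfolding dendric_preserving_def by blast
    then show "?tree s p" unfolding dendric_image_shift_iff[OF par] by blast
  qed
next
  assume trees: "\<forall>s p. ?adm s p \<longrightarrow> ?two_left s p \<longrightarrow> ?two_right s p \<longrightarrow> ?tree s p"
  show "dendric_preserving \<sigma> X v"
    unfolding dendric_preserving_def
  proof (intro allI impI)
    fix u assume "ext_image \<sigma> X v u" and bisp: "bispecial (image_shift \<sigma> X) u"
    then obtain s p where adm: "?adm s p" and u: "u = s @ morph \<sigma> v @ p"
      and lang: "u \<in> lang (image_shift \<sigma> X)"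
      unfolding ext_image_iff by blast
    have par: "parsable s p" using adm by (simp add: admissible_iff)
    have "?two_left s p" "?two_right s p"
      using bisp unfolding u bispecial_image_shift_iff[OF par] by blast+
    then have "?tree s p" using trees adm by blast
    then show "dendric (image_shift \<sigma> X) u"
      using lang unfolding u dendric_image_shift_iff[OF par] by blast
  qed
qed

lemma dendric_preserving_iff_connected:
  assumes "bip_edge_tree (ext X v)" "finite (ext X v)"
  shows "dendric_preserving \<sigma> X v \<longleftrightarrow>
    (\<forall>s p. admissible (ext X v) s p \<longrightarrow> bip_connected (restrict_ext (ext X v) s p))"
proof
  assume "dendric_preserving \<sigma> X v"
  then show "\<forall>s p. admissible (ext X v) s p \<longrightarrow> bip_connected (restrict_ext (ext X v) s p)"
    using bip_connected_restrict_if_image_trees[OF assms(2)]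
    unfolding dendric_preserving_iff_image_trees by blast
next
  assume "\<forall>s p. admissible (ext X v) s p \<longrightarrow> bip_connected (restrict_ext (ext X v) s p)"
  then show "dendric_preserving \<sigma> X v"
    using bip_edge_tree_image_ext[OF assms] unfolding dendric_preserving_iff_image_trees by blast
qed

end

section \<open>The conditions on s0 and p0\<close>

lemma two_le_card_obtain:
  assumes "2 \<le> card S"
  obtains x y where "x \<in> S" "y \<in> S" "x \<noteq> y"
proof -
  have "finite S" using assms card.infinite by force
  then have "\<not> (\<forall>x\<in>S. \<forall>y\<in>S. x = y)" using assms card_le_Suc0_iff_eq by fastforce
  then show ?thesis using that by blast
qed

context slp_morphism
begin

lemma ext_xy_tree_iff: "ext_xy_tree \<sigma> l X v s p \<longleftrightarrow> bip_edge_tree (restrict_ext (ext X v) s p)"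
proof -
  have "ext_xy \<sigma> l X v s p = restrict_ext (ext X v) s p"
    unfolding ext_xy_def left_ext_x_def right_ext_y_def restrict_ext_def
      left_ext_eq_fst_ext right_ext_eq_snd_ext by force
  then show ?thesis unfolding ext_xy_tree_def bip_tree_iff_edge_tree by simp
qed

lemma s_zero_in_T_minus_suffix:
  assumes "a1 \<in> left_ext X v" "a2 \<in> left_ext X v" "a1 \<noteq> a2"
  shows "s_zero \<sigma> X v \<in> T_minus \<sigma> X v" and "a \<in> left_ext X v \<Longrightarrow> suffix (s_zero \<sigma> X v) (\<sigma> a)"
proof -
  let ?P = "\<lambda>s. s \<in> T_minus \<sigma> X v \<union> \<sigma> ` left_ext X v"
  let ?s0 = "s_zero \<sigma> X v"
  have "?P (lcs (\<sigma> a1) (\<sigma> a2))" unfolding T_minus_def using assms by blast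
  then have s0: "?P ?s0" and shortest: "\<And>t. ?P t \<Longrightarrow> length ?s0 \<le> length t"
    using arg_min_nat_lemma[of ?P _ length] unfolding s_zero_def by auto
  show T: "?s0 \<in> T_minus \<sigma> X v"
  proof (rule ccontr)
    assume "?s0 \<notin> T_minus \<sigma> X v"
    then obtain a where a: "a \<in> left_ext X v" "?s0 = \<sigma> a" using s0 by blast
    obtain a' where a': "a' \<in> left_ext X v" "a' \<noteq> a" using assms by metis
    have "?P (lcs (\<sigma> a) (\<sigma> a'))" unfolding T_minus_def using a a' by blast
    then have "length (\<sigma> a) \<le> length (lcs (\<sigma> a) (\<sigma> a'))" using shortest a(2) by metis
    moreover have "lcs (\<sigma> a) (\<sigma> a') \<noteq> \<sigma> a" using lcs_image_neq a'(2) by metis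
    ultimately show False
      using suffix_length_less[of "lcs (\<sigma> a) (\<sigma> a')" "\<sigma> a"] suffix_lcs1[of "\<sigma> a" "\<sigma> a'"]
      unfolding strict_suffix_def by linarith
  qed
  then obtain c1 c2 where c: "c1 \<in> left_ext X v" "c2 \<in> left_ext X v" "c1 \<noteq> c2"
    "?s0 = lcs (\<sigma> c1) (\<sigma> c2)"
    unfolding T_minus_def by blast
  show "suffix ?s0 (\<sigma> a)" if "a \<in> left_ext X v"
  proof (rule suffix_all_if_shortest_lcs[OF c(1) _ that])
    show "suffix ?s0 (\<sigma> c1)" using c(4) suffix_lcs1 by metis
    show "length ?s0 \<le> length (lcs (\<sigma> y) (\<sigma> z))"
      if "y \<in> left_ext X v" "z \<in> left_ext X v" "y \<noteq> z" for y z
      using that shortest unfolding T_minus_def by blast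
  qed
qed

lemma p_zero_in_T_plus_prefix:
  assumes "b1 \<in> right_ext X v" "b2 \<in> right_ext X v" "b1 \<noteq> b2"
  shows "p_zero \<sigma> l X v \<in> T_plus \<sigma> X v" and "b \<in> right_ext X v \<Longrightarrow> prefix (p_zero \<sigma> l X v) (\<sigma> b)"
proof -
  let ?P = "\<lambda>p. p \<in> T_plus \<sigma> X v \<union> (\<lambda>b. \<sigma> b @ [l]) ` right_ext X v"
  let ?p0 = "p_zero \<sigma> l X v"
  have "?P (lcp (\<sigma> b1) (\<sigma> b2))" unfolding T_plus_def using assms by blast
  then have p0: "?P ?p0" and shortest: "\<And>t. ?P t \<Longrightarrow> length ?p0 \<le> length t"
    using arg_min_nat_lemma[of ?P _ length] unfolding p_zero_def by auto
  show T: "?p0 \<in> T_plus \<sigma> X v"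
  proof (rule ccontr)
    assume "?p0 \<notin> T_plus \<sigma> X v"
    then obtain b where b: "b \<in> right_ext X v" "?p0 = \<sigma> b @ [l]" using p0 by blast
    obtain b' where b': "b' \<in> right_ext X v" "b' \<noteq> b" using assms by metis
    have "?P (lcp (\<sigma> b) (\<sigma> b'))" unfolding T_plus_def using b b' by blast
    then have "length (\<sigma> b @ [l]) \<le> length (lcp (\<sigma> b) (\<sigma> b'))" using shortest b(2) by metis
    then show False using prefix_length_le[OF prefix_lcp1[of "\<sigma> b" "\<sigma> b'"]] by simp
  qed
  then obtain c1 c2 where c: "c1 \<in> right_ext X v" "c2 \<in> right_ext X v" "c1 \<noteq> c2"
    "?p0 = lcp (\<sigma> c1) (\<sigma> c2)"
    unfolding T_plus_def by blast
  show "prefix ?p0 (\<sigma> b)" if "b \<in> right_ext X v"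
  proof (rule prefix_all_if_shortest_lcp[OF c(1) _ that])
    show "prefix ?p0 (\<sigma> c1)" using c(4) prefix_lcp1 by metis
    show "length ?p0 \<le> length (lcp (\<sigma> y) (\<sigma> z))"
      if "y \<in> right_ext X v" "z \<in> right_ext X v" "y \<noteq> z" for y z
      using that shortest unfolding T_plus_def by blast
  qed
qed

lemma restrict_ext_Nil_Nil: "restrict_ext G [] [] = G"
  unfolding restrict_ext_def by auto

lemma restrict_ext_s_zero:
  assumes "a1 \<in> left_ext X v" "a2 \<in> left_ext X v" "a1 \<noteq> a2"
  shows "restrict_ext (ext X v) (s_zero \<sigma> X v) p = restrict_ext (ext X v) [] p"
  using s_zero_in_T_minus_suffix(2)[OF assms] unfolding restrict_ext_def left_ext_eq_fst_ext
  by force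

lemma restrict_ext_p_zero:
  assumes "b1 \<in> right_ext X v" "b2 \<in> right_ext X v" "b1 \<noteq> b2"
  shows "restrict_ext (ext X v) s (p_zero \<sigma> l X v) = restrict_ext (ext X v) s []"
proof -
  have "prefix (p_zero \<sigma> l X v) (\<sigma> b @ [l])" if "(a, b) \<in> ext X v" for a b
    using p_zero_in_T_plus_prefix(2)[OF assms, of b] that prefix_prefix
    unfolding right_ext_eq_snd_ext by force
  then show ?thesis unfolding restrict_ext_def by (auto simp del: prefix_snoc)
qed

lemma restrict_ext_suffix_eq_lcs:
  assumes e: "e1 \<in> fst ` restrict_ext (ext X v) s []" "e2 \<in> fst ` restrict_ext (ext X v) s []"
    "e1 \<noteq> e2"
  shows "\<exists>t\<in>T_minus \<sigma> X v. restrict_ext (ext X v) t [] = restrict_ext (ext X v) s []"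
proof -
  let ?A = "fst ` restrict_ext (ext X v) s []"
  have A_iff: "a \<in> ?A \<longleftrightarrow> a \<in> left_ext X v \<and> suffix s (\<sigma> a)" for a
    unfolding left_ext_eq_fst_ext restrict_ext_def by force
  obtain x1 x2 where x: "x1 \<in> ?A" "x2 \<in> ?A" "x1 \<noteq> x2"
    and common: "\<And>a. a \<in> ?A \<Longrightarrow> suffix (lcs (\<sigma> x1) (\<sigma> x2)) (\<sigma> a)"
    using ex_lcs_common_suffix[OF e, of \<sigma>] by blast
  define t where "t = lcs (\<sigma> x1) (\<sigma> x2)"
  have "suffix s (\<sigma> x1)" "suffix s (\<sigma> x2)" using x(1,2) A_iff by blast+
  then have "suffix s t" unfolding t_def by (rule suffix_lcs_greatest)
  have t_iff: "suffix t (\<sigma> a) \<longleftrightarrow> suffix s (\<sigma> a)" if "a \<in> left_ext X v" for a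
  proof
    assume "suffix s (\<sigma> a)"
    then show "suffix t (\<sigma> a)" using common[of a] A_iff that unfolding t_def by blast
  qed (rule suffix_order.trans[OF \<open>suffix s t\<close>])
  have "a \<in> left_ext X v" if "(a, b) \<in> ext X v" for a b
    using that unfolding left_ext_eq_fst_ext by force
  then have "restrict_ext (ext X v) t [] = restrict_ext (ext X v) s []"
    using t_iff unfolding restrict_ext_def by auto
  moreover have "t \<in> T_minus \<sigma> X v" using x A_iff unfolding T_minus_def t_def by blast
  ultimately show ?thesis by blast
qed

lemma restrict_ext_prefix_eq_lcp:
  assumes e: "e1 \<in> snd ` restrict_ext (ext X v) [] p" "e2 \<in> snd ` restrict_ext (ext X v) [] p"
    "e1 \<noteq> e2"
  shows "\<exists>t\<in>T_plus \<sigma> X v. restrict_ext (ext X v) [] t = restrict_ext (ext X v) [] p"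
proof -
  let ?B = "snd ` restrict_ext (ext X v) [] p"
  have B_iff: "b \<in> ?B \<longleftrightarrow> b \<in> right_ext X v \<and> prefix p (\<sigma> b @ [l])" for b
    unfolding right_ext_eq_snd_ext restrict_ext_def by force
  obtain x1 x2 where x: "x1 \<in> ?B" "x2 \<in> ?B" "x1 \<noteq> x2"
    and common: "\<And>b. b \<in> ?B \<Longrightarrow> prefix (lcp (\<sigma> x1) (\<sigma> x2)) (\<sigma> b)"
    using ex_lcp_common_prefix[OF e, of \<sigma>] by blast
  define t where "t = lcp (\<sigma> x1) (\<sigma> x2)"
  have "prefix p (\<sigma> x1 @ [l])" "prefix p (\<sigma> x2 @ [l])" using x(1,2) B_iff by blast+
  then have "prefix p (\<sigma> x1)" "prefix p (\<sigma> x2)"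
    using prefix_image_if_prefix_image_marker x(3) by (blast, metis)
  then have "prefix p t" unfolding t_def by (rule prefix_lcp_greatest)
  have t_iff: "prefix t (\<sigma> b @ [l]) \<longleftrightarrow> prefix p (\<sigma> b @ [l])" if "b \<in> right_ext X v" for b
  proof
    assume "prefix p (\<sigma> b @ [l])"
    then have "prefix t (\<sigma> b)" using common[of b] B_iff that unfolding t_def by blast
    then show "prefix t (\<sigma> b @ [l])" by (rule prefix_prefix)
  qed (rule prefix_order.trans[OF \<open>prefix p t\<close>])
  have "b \<in> right_ext X v" if "(a, b) \<in> ext X v" for a b
    using that unfolding right_ext_eq_snd_ext by force
  then have "restrict_ext (ext X v) [] t = restrict_ext (ext X v) [] p"
    using t_iff unfolding restrict_ext_def by (auto simp del: prefix_snoc)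
  moreover have "t \<in> T_plus \<sigma> X v" using x B_iff unfolding T_plus_def t_def by blast
  ultimately show ?thesis by blast
qed

lemma bip_connected_restrict_suffix:
  assumes tree: "bip_edge_tree (ext X v)"
    and L: "a1 \<in> left_ext X v" "a2 \<in> left_ext X v" "a1 \<noteq> a2"
    and R: "b1 \<in> right_ext X v" "b2 \<in> right_ext X v" "b1 \<noteq> b2"
    and cond: "\<forall>s \<in> T_minus \<sigma> X v - {s_zero \<sigma> X v}. ext_xy_tree \<sigma> l X v s (p_zero \<sigma> l X v)"
  shows "bip_connected (restrict_ext (ext X v) s [])"
proof (cases "\<exists>e1\<in>fst ` restrict_ext (ext X v) s []. \<exists>e2\<in>fst ` restrict_ext (ext X v) s []. e1 \<noteq> e2")
  case True
  then obtain t where t: "t \<in> T_minus \<sigma> X v"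
    and eq: "restrict_ext (ext X v) t [] = restrict_ext (ext X v) s []"
    using restrict_ext_suffix_eq_lcs by blast
  show ?thesis
  proof (cases "t = s_zero \<sigma> X v")
    case True
    then show ?thesis
      using tree eq restrict_ext_s_zero[OF L, of "[]"] by (simp add: restrict_ext_Nil_Nil ug_tree_def)
  next
    case False
    then have "bip_edge_tree (restrict_ext (ext X v) t (p_zero \<sigma> l X v))"
      using cond t ext_xy_tree_iff by blast
    then show ?thesis using eq restrict_ext_p_zero[OF R, of t] by (simp add: ug_tree_def)
  qed
next
  case False
  then show ?thesis by (intro bip_connected_single_Inl) force
qed

lemma bip_connected_restrict_prefix:
  assumes tree: "bip_edge_tree (ext X v)"
    and L: "a1 \<in> left_ext X v" "a2 \<in> left_ext X v" "a1 \<noteq> a2"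
    and R: "b1 \<in> right_ext X v" "b2 \<in> right_ext X v" "b1 \<noteq> b2"
    and cond: "\<forall>p \<in> T_plus \<sigma> X v - {p_zero \<sigma> l X v}. ext_xy_tree \<sigma> l X v (s_zero \<sigma> X v) p"
  shows "bip_connected (restrict_ext (ext X v) [] p)"
proof (cases "\<exists>e1\<in>snd ` restrict_ext (ext X v) [] p. \<exists>e2\<in>snd ` restrict_ext (ext X v) [] p. e1 \<noteq> e2")
  case True
  then obtain t where t: "t \<in> T_plus \<sigma> X v"
    and eq: "restrict_ext (ext X v) [] t = restrict_ext (ext X v) [] p"
    using restrict_ext_prefix_eq_lcp by blast
  show ?thesis
  proof (cases "t = p_zero \<sigma> l X v")
    case True
    then show ?thesis
      using tree eq restrict_ext_p_zero[OF R, of "[]"] by (simp add: restrict_ext_Nil_Nil ug_tree_def)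
  next
    case False
    then have "bip_edge_tree (restrict_ext (ext X v) (s_zero \<sigma> X v) t)"
      using cond t ext_xy_tree_iff by blast
    then show ?thesis using eq restrict_ext_s_zero[OF L, of t] by (simp add: ug_tree_def)
  qed
next
  case False
  then show ?thesis by (intro bip_connected_single_Inr) force
qed

lemma admissible_T_minus_p_zero:
  assumes R: "b1 \<in> right_ext X v" "b2 \<in> right_ext X v" "b1 \<noteq> b2"
    and s: "s \<in> T_minus \<sigma> X v"
  shows "admissible (ext X v) s (p_zero \<sigma> l X v)"
proof -
  obtain c1 c2 where c: "c1 \<in> left_ext X v" "c1 \<noteq> c2" "s = lcs (\<sigma> c1) (\<sigma> c2)"
    using s unfolding T_minus_def by blast
  obtain b where "(c1, b) \<in> ext X v" using c(1) unfolding left_ext_eq_fst_ext by force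
  moreover have "b \<in> right_ext X v" using calculation unfolding right_ext_eq_snd_ext by force
  moreover have "suffix s (\<sigma> c1)" "s \<noteq> \<sigma> c1"
    unfolding c(3) using suffix_lcs1 lcs_image_neq[OF c(2)] by auto
  moreover obtain d1 d2 where "p_zero \<sigma> l X v = lcp (\<sigma> d1) (\<sigma> d2)"
    using p_zero_in_T_plus_prefix(1)[OF R] unfolding T_plus_def by blast
  then have "p_zero \<sigma> l X v \<noteq> []" using lcp_image_neq_Nil by simp
  ultimately show ?thesis
    unfolding admissible_def using p_zero_in_T_plus_prefix(2)[OF R] by blast
qed

lemma admissible_s_zero_T_plus:
  assumes L: "a1 \<in> left_ext X v" "a2 \<in> left_ext X v" "a1 \<noteq> a2"
    and p: "p \<in> T_plus \<sigma> X v"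
  shows "admissible (ext X v) (s_zero \<sigma> X v) p"
proof -
  let ?s0 = "s_zero \<sigma> X v"
  obtain c1 c2 where c: "c1 \<in> right_ext X v" "c1 \<noteq> c2" "p = lcp (\<sigma> c1) (\<sigma> c2)"
    using p unfolding T_plus_def by blast
  obtain a where "(a, c1) \<in> ext X v" using c(1) unfolding right_ext_eq_snd_ext by force
  moreover have "a \<in> left_ext X v" using calculation unfolding left_ext_eq_fst_ext by force
  then have "suffix ?s0 (\<sigma> a)" by (rule s_zero_in_T_minus_suffix(2)[OF L])
  moreover obtain e1 e2 where "e1 \<noteq> e2" "?s0 = lcs (\<sigma> e1) (\<sigma> e2)"
    using s_zero_in_T_minus_suffix(1)[OF L] unfolding T_minus_def by blast
  then have "l \<notin> set ?s0"
    using marker_notin_proper_suffix[OF suffix_lcs1 lcs_image_neq[of e1 e2]] by simp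
  then have "?s0 \<noteq> \<sigma> a" by (rule image_neq_if_marker_notin)
  moreover have "prefix p (\<sigma> c1)" "p \<noteq> []"
    unfolding c(3) by (simp_all add: prefix_lcp1 lcp_image_neq_Nil)
  ultimately show ?thesis unfolding admissible_def by blast
qed

lemma bip_connected_restrict_if_conditions:
  assumes tree: "bip_edge_tree (ext X v)"
    and L: "a1 \<in> left_ext X v" "a2 \<in> left_ext X v" "a1 \<noteq> a2"
    and R: "b1 \<in> right_ext X v" "b2 \<in> right_ext X v" "b1 \<noteq> b2"
    and cond1: "\<forall>s \<in> T_minus \<sigma> X v - {s_zero \<sigma> X v}. ext_xy_tree \<sigma> l X v s (p_zero \<sigma> l X v)"
    and cond2: "\<forall>p \<in> T_plus \<sigma> X v - {p_zero \<sigma> l X v}. ext_xy_tree \<sigma> l X v (s_zero \<sigma> X v) p"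
  shows "bip_connected (restrict_ext (ext X v) s p)"
proof -
  have "bip_connected (ext X v \<inter> {a. suffix s (\<sigma> a)} \<times> UNIV)"
    using bip_connected_restrict_suffix[OF tree L R cond1] unfolding restrict_ext_eq_Int(2) .
  moreover have "bip_connected (ext X v \<inter> UNIV \<times> {b. prefix p (\<sigma> b @ [l])})"
    using bip_connected_restrict_prefix[OF tree L R cond2] unfolding restrict_ext_eq_Int(3) .
  ultimately show ?thesis unfolding restrict_ext_eq_Int(1) by (rule bip_connected_Int[OF tree])
qed

lemma connected_restrict_iff_conditions:
  assumes tree: "bip_edge_tree (ext X v)" and bisp: "bispecial X v"
  shows "(\<forall>s p. admissible (ext X v) s p \<longrightarrow> bip_connected (restrict_ext (ext X v) s p)) \<longleftrightarrow>
    (\<forall>s \<in> T_minus \<sigma> X v - {s_zero \<sigma> X v}. ext_xy_tree \<sigma> l X v s (p_zero \<sigma> l X v)) \<and>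
    (\<forall>p \<in> T_plus \<sigma> X v - {p_zero \<sigma> l X v}. ext_xy_tree \<sigma> l X v (s_zero \<sigma> X v) p)"
proof -
  obtain a1 a2 where L: "a1 \<in> left_ext X v" "a2 \<in> left_ext X v" "a1 \<noteq> a2"
    using bisp unfolding bispecial_def by (auto elim: two_le_card_obtain)
  obtain b1 b2 where R: "b1 \<in> right_ext X v" "b2 \<in> right_ext X v" "b1 \<noteq> b2"
    using bisp unfolding bispecial_def by (auto elim: two_le_card_obtain)
  have "bip_edge_tree (restrict_ext (ext X v) s p)"
    if "admissible (ext X v) s p" "bip_connected (restrict_ext (ext X v) s p)" for s p
    using that bip_edge_tree_subset[OF tree restrict_ext_subset] admissible_iff by blast
  then show ?thesis
    using admissible_T_minus_p_zero[OF R] admissible_s_zero_T_plus[OF L]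
      bip_connected_restrict_if_conditions[OF tree L R] unfolding ext_xy_tree_iff by blast
qed

end

theorem proposition4p5:
  fixes X :: "(int \<Rightarrow> 'a::finite) set"
    and \<sigma> :: "'a \<Rightarrow> 'b::finite list"
    and l :: 'b
    and v :: "'a list"
  assumes "shift_space X"
    and "bispecial X v"
    and "dendric X v"
    and "inj (morph \<sigma>)"
    and "strongly_left_proper \<sigma> l"
  shows "dendric_preserving \<sigma> X v \<longleftrightarrow>
     ((\<forall>s \<in> T_minus \<sigma> X v - {s_zero \<sigma> X v}. ext_xy_tree \<sigma> l X v s (p_zero \<sigma> l X v)) \<and>
      (\<forall>p \<in> T_plus \<sigma> X v - {p_zero \<sigma> l X v}. ext_xy_tree \<sigma> l X v (s_zero \<sigma> X v) p))"
proof -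
  interpret slp_morphism \<sigma> l
    using assms(5) inj_if_inj_morph[OF assms(4)] by unfold_locales
  have tree: "bip_edge_tree (ext X v)"
    using assms(3) unfolding dendric_def left_ext_eq_fst_ext right_ext_eq_snd_ext
      bip_tree_iff_edge_tree by blast
  have "finite (ext X v)" by simp
  then show ?thesis
    using dendric_preserving_iff_connected[OF tree] connected_restrict_iff_conditions[OF tree assms(2)]
    by simp
qed

end
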